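(* Let $M$ be a regular indecomposable representation of $(T(n),\Omega)$ which is a sink module with center $c$ and radius $r$. Then $d(M)-2\le d(\sigma M)\le d(M)$, and exactly one of the following holds: (1) $d(\sigma M)=d(M)-2$; this happens if and only if $\sigma M$ is a sink module, if and only if $M$ is complete; in this case the center of $\sigma M$ is $c$. (2) $d(\sigma M)=d(M)-1$; this happens if and only if $\sigma M$ is a flow module; in this case the center of $\sigma M$ is an edge $\{c,c'\}$ such that there is a path $(x_0,x_1,\dots,x_r)$ in $T(n)$ with $x_0=c$, $x_1=c'$ and $x_r$ a source of $\sigma\Omega$. (3) $d(\sigma M)=d(M)$; this happens if and only if $\sigma M$ is a source module; in this case the center of $\sigma M$ is $c$.
   Context: Let $k$ be a field and $n\ge 3$. $T(n)$ is the $n$-regular tree; fix a bipartite orientation $\Omega$ (every vertex a sink or a source), $\sigma\Omega$ the opposite orientation. A module is a finite-dimensional $k$-representation of $(T(n),\Omega)$ or $(T(n),\sigma\Omega)$. The shift functor $\sigma$ is the composition of the Bernstein–Gelfand–Ponomarev reflection functors at all sinks, sending representations of $(T(n),\Omega)$ to representations of $(T(n),\sigma\Omega)$ and vice versa. An indecomposable module $M$ is regular if $\sigma^tM\neq 0$ for all $t\in\mathbb Z$ ($\sigma^t$ for $t<0$ being powers of the left adjoint $\sigma^-$). A path of length $t$ is a sequence $(a_0,\dots,a_t)$ of vertices, consecutive ones neighbours, with $a_{i-1}\neq a_{i+1}$; a path of length $2r$ has center $a_r$, radius $r$; a path of length $2r+1$ has center the edge $\{a_r,a_{r+1}\}$,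 radius $r$. For indecomposable $M$, $T(M)$ is the full subgraph on vertices $a$ with $M_a\neq0$; a diameter path is a path in $T(M)$ of maximal length $d(M)$; all diameter paths share a center, the center of $M$; $r(M)=\lfloor d(M)/2\rfloor$. $M$ is a sink (resp. source) module if its diameter paths start and end at sinks (resp. sources) of the orientation of its quiver, and a flow module if $d(M)$ is odd. A sink module $M$ with center $p$ and radius $r$ is complete if $r\ge1$ and for every path $(x(0),x(1),\dots,x(r))$ in $T(n)$ with $x(r)=p$ and $x(1),\dots,x(r)$ vertices of $T(M)$, one has $\dim M_{x(0)}=\dim M_{x(1)}$. *)

theory Defs
  imports "Jordan_Normal_Form.Matrix"
begin

definition is_path :: "('v \<Rightarrow> 'v \<Rightarrow> bool) \<Rightarrow> 'v list \<Rightarrow> bool" where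
  "is_path adj xs \<longleftrightarrow> xs \<noteq> [] \<and>
     (\<forall>i. Suc i < length xs \<longrightarrow> adj (xs ! i) (xs ! Suc i)) \<and>
     (\<forall>i. Suc (Suc i) < length xs \<longrightarrow> xs ! i \<noteq> xs ! Suc (Suc i))"

definition regular_tree :: "nat \<Rightarrow> ('v \<Rightarrow> 'v \<Rightarrow> bool) \<Rightarrow> bool" where
  "regular_tree n adj \<longleftrightarrow>
     (\<forall>a b. adj a b \<longrightarrow> adj b a) \<and> (\<forall>a. \<not> adj a a) \<and>
     (\<forall>a. finite {b. adj a b} \<and> card {b. adj a b} = n) \<and>
     (\<forall>a b. \<exists>xs. is_path adj xs \<and> hd xs = a \<and> last xs = b) \<and>
     (\<forall>xs. is_path adj xs \<and> length xs \<ge> 2 \<longrightarrow> hd xs \<noteq> last xs)"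

text \<open>The orientation Omega is encoded by the boolean True:
  in orientation o, vertex a is a sink iff part a = o (and a source otherwise).
  sigma Omega is the orientation False.\<close>
definition bipartite :: "('v \<Rightarrow> 'v \<Rightarrow> bool) \<Rightarrow> ('v \<Rightarrow> bool) \<Rightarrow> bool" where
  "bipartite adj part \<longleftrightarrow> (\<forall>a b. adj a b \<longrightarrow> part a \<noteq> part b)"

text \<open>A representation: orientation, dimension vector (M_a = k^(dimv a)), and for every
  arrow a -> b (a source, b sink) a matrix mapr a b of size dimv b x dimv a.\<close>
record ('v, 'k) rep =
  orient :: bool
  dimv :: "'v \<Rightarrow> nat"
  mapr :: "'v \<Rightarrow> 'v \<Rightarrow> 'k mat"

definition supp :: "('v, 'k) rep \<Rightarrow> 'v set" where
  "supp M = {a. dimv M a \<noteq> 0}"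

definition is_zero :: "('v, 'k) rep \<Rightarrow> bool" where
  "is_zero M \<longleftrightarrow> (\<forall>a. dimv M a = 0)"

definition rep_wf :: "('v \<Rightarrow> 'v \<Rightarrow> bool) \<Rightarrow> ('v \<Rightarrow> bool) \<Rightarrow> ('v, 'k) rep \<Rightarrow> bool" where
  "rep_wf adj part M \<longleftrightarrow> finite (supp M) \<and>
     (\<forall>a b. adj a b \<and> part b = orient M \<longrightarrow> mapr M a b \<in> carrier_mat (dimv M b) (dimv M a))"

definition rep_iso :: "('v \<Rightarrow> 'v \<Rightarrow> bool) \<Rightarrow> ('v \<Rightarrow> bool) \<Rightarrow>
    ('v, 'k::field) rep \<Rightarrow> ('v, 'k) rep \<Rightarrow> bool" where
  "rep_iso adj part M M' \<longleftrightarrow> orient M' = orient M \<and>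
     (\<exists>f. (\<forall>a. f a \<in> carrier_mat (dimv M' a) (dimv M a) \<and> invertible_mat (f a)) \<and>
          (\<forall>a b. adj a b \<and> part b = orient M \<longrightarrow> f b * mapr M a b = mapr M' a b * f a))"

definition dsum :: "('v, 'k::field) rep \<Rightarrow> ('v, 'k) rep \<Rightarrow> ('v, 'k) rep" where
  "dsum M1 M2 = \<lparr> orient = orient M1, dimv = (\<lambda>a. dimv M1 a + dimv M2 a),
     mapr = (\<lambda>a b. four_block_mat (mapr M1 a b) (0\<^sub>m (dimv M1 b) (dimv M2 a))
                                  (0\<^sub>m (dimv M2 b) (dimv M1 a)) (mapr M2 a b)) \<rparr>"

definition indecomposable :: "('v \<Rightarrow> 'v \<Rightarrow> bool) \<Rightarrow> ('v \<Rightarrow> bool) \<Rightarrow> ('v, 'k::field) rep \<Rightarrow> bool" where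
  "indecomposable adj part M \<longleftrightarrow> rep_wf adj part M \<and> \<not> is_zero M \<and>
     \<not> (\<exists>M1 M2. rep_wf adj part M1 \<and> rep_wf adj part M2 \<and>
              orient M1 = orient M \<and> orient M2 = orient M \<and>
              \<not> is_zero M1 \<and> \<not> is_zero M2 \<and> rep_iso adj part M (dsum M1 M2))"

text \<open>is_sigma adj part M N: N is (a representative of the isomorphism class of) sigma M,
  the composition of BGP reflections at all sinks of M's orientation.  At a source y of M,
  N_y = M_y; at a sink x of M, N_x with the maps N_x -> M_y (arrows x -> y of the new
  orientation) is the kernel of the map  (+)_{y ~ x} M_y -> M_x.\<close>
definition is_sigma :: "('v \<Rightarrow> 'v \<Rightarrow> bool) \<Rightarrow> ('v \<Rightarrow> bool) \<Rightarrow>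
    ('v, 'k::field) rep \<Rightarrow> ('v, 'k) rep \<Rightarrow> bool" where
  "is_sigma adj part M N \<longleftrightarrow> rep_wf adj part N \<and> orient N = (\<not> orient M) \<and>
     (\<forall>y. part y \<noteq> orient M \<longrightarrow> dimv N y = dimv M y) \<and>
     (\<forall>x. part x = orient M \<longrightarrow>
        (\<forall>v\<in>carrier_vec (dimv N x).
            (\<forall>y. adj x y \<longrightarrow> mapr N x y *\<^sub>v v = 0\<^sub>v (dimv M y)) \<longrightarrow> v = 0\<^sub>v (dimv N x)) \<and>
        (\<forall>v\<in>carrier_vec (dimv N x). \<forall>i < dimv M x.
            (\<Sum>y\<in>{y. adj y x}. (mapr M y x *\<^sub>v (mapr N x y *\<^sub>v v)) $ i) = 0) \<and>
        (\<forall>w. (\<forall>y. adj y x \<longrightarrow> w y \<in> carrier_vec (dimv M y)) \<and>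
             (\<forall>i < dimv M x. (\<Sum>y\<in>{y. adj y x}. (mapr M y x *\<^sub>v w y) $ i) = 0) \<longrightarrow>
             (\<exists>v\<in>carrier_vec (dimv N x). \<forall>y. adj x y \<longrightarrow> mapr N x y *\<^sub>v v = w y)))"

text \<open>is_sigma_minus adj part M N: N is sigma^- M, the composition of BGP reflections at
  all sources of M's orientation (cokernels).  At a sink x of M, N_x = M_x; at a source y
  of M, N_y with the maps M_x -> N_y is the cokernel of  M_y -> (+)_{x ~ y} M_x.\<close>
definition is_sigma_minus :: "('v \<Rightarrow> 'v \<Rightarrow> bool) \<Rightarrow> ('v \<Rightarrow> bool) \<Rightarrow>
    ('v, 'k::field) rep \<Rightarrow> ('v, 'k) rep \<Rightarrow> bool" where
  "is_sigma_minus adj part M N \<longleftrightarrow> rep_wf adj part N \<and> orient N = (\<not> orient M) \<and>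
     (\<forall>x. part x = orient M \<longrightarrow> dimv N x = dimv M x) \<and>
     (\<forall>y. part y \<noteq> orient M \<longrightarrow>
        (\<forall>u\<in>carrier_vec (dimv N y). \<exists>w. (\<forall>x. adj y x \<longrightarrow> w x \<in> carrier_vec (dimv M x)) \<and>
            (\<forall>i < dimv N y. u $ i = (\<Sum>x\<in>{x. adj y x}. (mapr N x y *\<^sub>v w x) $ i))) \<and>
        (\<forall>v\<in>carrier_vec (dimv M y). \<forall>i < dimv N y.
            (\<Sum>x\<in>{x. adj y x}. (mapr N x y *\<^sub>v (mapr M y x *\<^sub>v v)) $ i) = 0) \<and>
        (\<forall>w. (\<forall>x. adj y x \<longrightarrow> w x \<in> carrier_vec (dimv M x)) \<and>
             (\<forall>i < dimv N y. (\<Sum>x\<in>{x. adj y x}. (mapr N x y *\<^sub>v w x) $ i) = 0) \<longrightarrow>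
             (\<exists>v\<in>carrier_vec (dimv M y). \<forall>x. adj y x \<longrightarrow> mapr M y x *\<^sub>v v = w x)))"

inductive sigma_iter :: "('v \<Rightarrow> 'v \<Rightarrow> bool) \<Rightarrow> ('v \<Rightarrow> bool) \<Rightarrow> nat \<Rightarrow>
    ('v, 'k::field) rep \<Rightarrow> ('v, 'k) rep \<Rightarrow> bool" for adj part where
  "sigma_iter adj part 0 M M"
| "sigma_iter adj part t M N \<Longrightarrow> is_sigma adj part N P \<Longrightarrow> sigma_iter adj part (Suc t) M P"

inductive sigma_minus_iter :: "('v \<Rightarrow> 'v \<Rightarrow> bool) \<Rightarrow> ('v \<Rightarrow> bool) \<Rightarrow> nat \<Rightarrow>
    ('v, 'k::field) rep \<Rightarrow> ('v, 'k) rep \<Rightarrow> bool" for adj part where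
  "sigma_minus_iter adj part 0 M M"
| "sigma_minus_iter adj part t M N \<Longrightarrow> is_sigma_minus adj part N P \<Longrightarrow>
     sigma_minus_iter adj part (Suc t) M P"

definition regular_module :: "('v \<Rightarrow> 'v \<Rightarrow> bool) \<Rightarrow> ('v \<Rightarrow> bool) \<Rightarrow> ('v, 'k::field) rep \<Rightarrow> bool" where
  "regular_module adj part M \<longleftrightarrow> indecomposable adj part M \<and>
     (\<forall>t N. sigma_iter adj part t M N \<longrightarrow> \<not> is_zero N) \<and>
     (\<forall>t N. sigma_minus_iter adj part t M N \<longrightarrow> \<not> is_zero N)"

definition diam :: "('v \<Rightarrow> 'v \<Rightarrow> bool) \<Rightarrow> ('v, 'k) rep \<Rightarrow> nat" where
  "diam adj M = Max {length xs - 1 | xs. is_path adj xs \<and> set xs \<subseteq> supp M}"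

definition diam_path :: "('v \<Rightarrow> 'v \<Rightarrow> bool) \<Rightarrow> ('v, 'k) rep \<Rightarrow> 'v list \<Rightarrow> bool" where
  "diam_path adj M xs \<longleftrightarrow> is_path adj xs \<and> set xs \<subseteq> supp M \<and> length xs - 1 = diam adj M"

definition path_center :: "'v list \<Rightarrow> 'v set" where
  "path_center xs = (let t = length xs - 1; r = t div 2 in
     if even t then {xs ! r} else {xs ! r, xs ! Suc r})"

definition has_center :: "('v \<Rightarrow> 'v \<Rightarrow> bool) \<Rightarrow> ('v, 'k) rep \<Rightarrow> 'v set \<Rightarrow> bool" where
  "has_center adj M C \<longleftrightarrow> (\<forall>xs. diam_path adj M xs \<longrightarrow> path_center xs = C)"

definition sink_module :: "('v \<Rightarrow> 'v \<Rightarrow> bool) \<Rightarrow> ('v \<Rightarrow> bool) \<Rightarrow> ('v, 'k) rep \<Rightarrow> bool" where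
  "sink_module adj part M \<longleftrightarrow>
     (\<forall>xs. diam_path adj M xs \<longrightarrow> part (hd xs) = orient M \<and> part (last xs) = orient M)"

definition source_module :: "('v \<Rightarrow> 'v \<Rightarrow> bool) \<Rightarrow> ('v \<Rightarrow> bool) \<Rightarrow> ('v, 'k) rep \<Rightarrow> bool" where
  "source_module adj part M \<longleftrightarrow>
     (\<forall>xs. diam_path adj M xs \<longrightarrow> part (hd xs) \<noteq> orient M \<and> part (last xs) \<noteq> orient M)"

definition flow_module :: "('v \<Rightarrow> 'v \<Rightarrow> bool) \<Rightarrow> ('v, 'k) rep \<Rightarrow> bool" where
  "flow_module adj M \<longleftrightarrow> odd (diam adj M)"

definition complete_module :: "('v \<Rightarrow> 'v \<Rightarrow> bool) \<Rightarrow> ('v, 'k) rep \<Rightarrow> 'v \<Rightarrow> nat \<Rightarrow> bool" where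
  "complete_module adj M p r \<longleftrightarrow> r \<ge> 1 \<and>
     (\<forall>xs. is_path adj xs \<and> length xs = Suc r \<and> xs ! r = p \<and>
           (\<forall>i\<in>{1..r}. xs ! i \<in> supp M) \<longrightarrow> dimv M (xs ! 0) = dimv M (xs ! 1))"

end

theory Submission
  imports Defs "Jordan_Normal_Form.Gauss_Jordan_Elimination" "Jordan_Normal_Form.Determinant"
begin

text \<open>
  Write S and T for the supports of M and \<sigma>M. Indecomposability makes S a subtree, so a
  sink module of diameter 2r with centre c lies in the ball of radius r around c, and a vertex
  is a sink of M iff its distance to c has the parity of r. The shift keeps M at the sources,
  while at a sink x the space (\<sigma>M)_x is the kernel of the map from the sum of the M_y,
  y adjacent to x, to M_x. Indecomposability makes this map surjective, and bijective only
  at sinks with at most one neighbour in S. Hence T contains the inner part of every diameter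
  path of M and stays inside the ball of radius r; a vertex x at distance r from c lies in T
  iff dim M_x differs from the dimension at its neighbour y towards c, which is exactly
  where completeness fails. If there is no such x, \<sigma>M is a sink module of diameter 2r-2
  centred at c; if all of them lie in one branch at c, it is a flow module of diameter 2r-1
  centred on the edge into that branch; otherwise it is a source module of diameter 2r
  centred at c.
\<close>

section \<open>Paths in trees\<close>

lemma is_path_adj_nth: "is_path adj xs \<Longrightarrow> Suc i < length xs \<Longrightarrow> adj (xs ! i) (xs ! Suc i)"
  unfolding is_path_def by blast

lemma is_path_no_backtrack: "is_path adj xs \<Longrightarrow> Suc (Suc i) < length xs \<Longrightarrow> xs ! i \<noteq> xs ! Suc (Suc i)"
  unfolding is_path_def by blast

lemma is_path_nonempty: "is_path adj xs \<Longrightarrow> xs \<noteq> []"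
  unfolding is_path_def by blast

lemma is_path_singleton[simp]: "is_path adj [a]"
  unfolding is_path_def by auto

lemma is_path_Cons: "is_path adj (a # xs) \<longleftrightarrow>
   (xs = [] \<or> (is_path adj xs \<and> adj a (hd xs) \<and> (tl xs \<noteq> [] \<longrightarrow> a \<noteq> hd (tl xs))))"
proof
  assume p: "is_path adj (a # xs)"
  show "xs = [] \<or> (is_path adj xs \<and> adj a (hd xs) \<and> (tl xs \<noteq> [] \<longrightarrow> a \<noteq> hd (tl xs)))"
  proof (cases xs)
    case (Cons b ys)
    have "is_path adj xs" unfolding is_path_def
    proof (intro conjI allI impI)
      fix i assume "Suc i < length xs" thus "adj (xs ! i) (xs ! Suc i)"
        using is_path_adj_nth[OF p, of "Suc i"] by auto
    next
      fix i assume "Suc (Suc i) < length xs" thus "xs ! i \<noteq> xs ! Suc (Suc i)"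
        using is_path_no_backtrack[OF p, of "Suc i"] by auto
    qed (insert Cons, auto)
    moreover have "adj a (hd xs)" using is_path_adj_nth[OF p, of 0] Cons by auto
    moreover have "tl xs \<noteq> [] \<longrightarrow> a \<noteq> hd (tl xs)" using is_path_no_backtrack[OF p, of 0] Cons
      by (cases ys, auto)
    ultimately show ?thesis by auto
  qed auto
next
  assume h: "xs = [] \<or> (is_path adj xs \<and> adj a (hd xs) \<and> (tl xs \<noteq> [] \<longrightarrow> a \<noteq> hd (tl xs)))"
  show "is_path adj (a # xs)"
  proof (cases "xs = []")
    case False
    with h have p: "is_path adj xs" and a: "adj a (hd xs)" and b: "tl xs \<noteq> [] \<longrightarrow> a \<noteq> hd (tl xs)" by auto
    show ?thesis unfolding is_path_def
    proof (intro conjI allI impI)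
      fix i assume i: "Suc i < length (a # xs)"
      show "adj ((a # xs) ! i) ((a # xs) ! Suc i)"
      proof (cases i)
        case 0 thus ?thesis using a False by (cases xs, auto)
      next
        case (Suc j) thus ?thesis using is_path_adj_nth[OF p, of j] i by auto
      qed
    next
      fix i assume i: "Suc (Suc i) < length (a # xs)"
      show "(a # xs) ! i \<noteq> (a # xs) ! Suc (Suc i)"
      proof (cases i)
        case 0 thus ?thesis using b False i by (cases xs, auto, case_tac list, auto)
      next
        case (Suc j) thus ?thesis using is_path_no_backtrack[OF p, of j] i by auto
      qed
    qed auto
  qed auto
qed

lemma is_path_take: "is_path adj xs \<Longrightarrow> 0 < k \<Longrightarrow> is_path adj (take k xs)"
  unfolding is_path_def by auto

lemma is_path_drop: assumes p: "is_path adj xs" and k: "k < length xs" shows "is_path adj (drop k xs)"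
  unfolding is_path_def
proof (intro conjI allI impI)
  fix i assume "Suc i < length (drop k xs)"
  thus "adj (drop k xs ! i) (drop k xs ! Suc i)" using is_path_adj_nth[OF p, of "k + i"] by auto
next
  fix i assume "Suc (Suc i) < length (drop k xs)"
  thus "drop k xs ! i \<noteq> drop k xs ! Suc (Suc i)" using is_path_no_backtrack[OF p, of "k + i"] by auto
qed (insert k, auto)

lemma is_path_append:
  assumes "is_path adj xs" "is_path adj ys" "adj (last xs) (hd ys)"
    "length xs \<ge> 2 \<Longrightarrow> xs ! (length xs - 2) \<noteq> hd ys"
    "length ys \<ge> 2 \<Longrightarrow> last xs \<noteq> ys ! 1"
  shows "is_path adj (xs @ ys)"
  using assms
proof (induction xs)
  case Nil thus ?case by (simp add: is_path_def)
next
  case (Cons x xs')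
  show ?case
  proof (cases "xs' = []")
    case True
    have "ys \<noteq> []" using Cons(3) is_path_nonempty by auto
    have "tl ys \<noteq> [] \<longrightarrow> x \<noteq> hd (tl ys)"
    proof
      assume "tl ys \<noteq> []"
      hence "length ys \<ge> 2" by (cases ys, auto simp: Suc_le_eq)
      thus "x \<noteq> hd (tl ys)" using Cons(6) True \<open>tl ys \<noteq> []\<close> by (auto simp: hd_conv_nth nth_tl)
    qed
    hence "is_path adj (x # ys)" using Cons(3,4) True \<open>ys \<noteq> []\<close> by (intro is_path_Cons[THEN iffD2], auto)
    thus ?thesis using True by simp
  next
    case False
    have p': "is_path adj xs'" using Cons(2) False by (auto simp: is_path_Cons)
    have IH: "is_path adj (xs' @ ys)"
    proof (rule Cons.IH[OF p' Cons(3)])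
      show "adj (last xs') (hd ys)" using Cons(4) False by auto
      show "length xs' \<ge> 2 \<Longrightarrow> xs' ! (length xs' - 2) \<noteq> hd ys"
        using Cons(5) False by (auto simp: nth_Cons' numeral_2_eq_2)
      show "length ys \<ge> 2 \<Longrightarrow> last xs' \<noteq> ys ! 1" using Cons(6) False by auto
    qed
    have a: "adj x (hd xs')" using Cons(2) False by (auto simp: is_path_Cons)
    have b: "x \<noteq> hd (tl (xs' @ ys))"
    proof (cases "tl xs' = []")
      case True
      then obtain h where h: "xs' = [h]" using False by (cases xs', auto)
      have "ys \<noteq> []" using Cons(3) is_path_nonempty by auto
      thus ?thesis using Cons(5) h by (cases ys, auto)
    next
      case False2: False
      thus ?thesis using Cons(2) False by (auto simp: is_path_Cons)
    qed
    show ?thesis using IH a b False by (auto simp: is_path_Cons)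
  qed
qed

lemma is_path_rev: "is_path adj xs \<Longrightarrow> (\<And>a b. adj a b \<Longrightarrow> adj b a) \<Longrightarrow> is_path adj (rev xs)"
  unfolding is_path_def
proof (intro conjI allI impI)
  fix i assume p: "xs \<noteq> [] \<and> (\<forall>i. Suc i < length xs \<longrightarrow> adj (xs ! i) (xs ! Suc i)) \<and>
        (\<forall>i. Suc (Suc i) < length xs \<longrightarrow> xs ! i \<noteq> xs ! Suc (Suc i))"
    and s: "\<And>a b. adj a b \<Longrightarrow> adj b a" and i: "Suc i < length (rev xs)"
  have "adj (xs ! (length xs - Suc (Suc i))) (xs ! Suc (length xs - Suc (Suc i)))"
    using p i by auto
  moreover have "Suc (length xs - Suc (Suc i)) = length xs - Suc i" using i by auto
  ultimately show "adj (rev xs ! i) (rev xs ! Suc i)" using i s by (auto simp: rev_nth)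
next
  fix i assume p: "xs \<noteq> [] \<and> (\<forall>i. Suc i < length xs \<longrightarrow> adj (xs ! i) (xs ! Suc i)) \<and>
        (\<forall>i. Suc (Suc i) < length xs \<longrightarrow> xs ! i \<noteq> xs ! Suc (Suc i))"
    and i: "Suc (Suc i) < length (rev xs)"
  have "xs ! (length xs - Suc (Suc (Suc i))) \<noteq> xs ! Suc (Suc (length xs - Suc (Suc (Suc i))))"
    using p i by auto
  moreover have "Suc (Suc (length xs - Suc (Suc (Suc i)))) = length xs - Suc i" using i by auto
  ultimately show "rev xs ! i \<noteq> rev xs ! Suc (Suc i)" using i by (auto simp: rev_nth)
qed auto

lemma hd_tl_nth: "1 < length xs \<Longrightarrow> hd (tl xs) = xs ! 1"
  by (cases xs; cases "tl xs"; auto)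

locale tree =
  fixes adj :: "'v \<Rightarrow> 'v \<Rightarrow> bool"
  assumes sym: "adj a b \<Longrightarrow> adj b a"
    and irr: "\<not> adj a a"
    and connected: "\<exists>xs. is_path adj xs \<and> hd xs = a \<and> last xs = b"
    and acyc: "is_path adj xs \<Longrightarrow> length xs \<ge> 2 \<Longrightarrow> hd xs \<noteq> last xs"
begin

lemma rev_is_path: "is_path adj xs \<Longrightarrow> is_path adj (rev xs)"
  using is_path_rev sym by blast

lemma distinct_path: assumes p: "is_path adj xs" shows "distinct xs"
proof (rule ccontr)
  assume "\<not> distinct xs"
  then obtain i j where ij: "i < j" "j < length xs" "xs ! i = xs ! j"
    by (metis distinct_conv_nth nat_neq_iff)
  define ys where "ys = take (j - i + 1) (drop i xs)"
  have "is_path adj ys" unfolding ys_def using is_path_drop[OF p, of i] ij by (intro is_path_take, auto)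
  moreover have "length ys \<ge> 2" unfolding ys_def using ij by auto
  moreover have "hd ys = xs ! i" unfolding ys_def using ij by (auto simp: hd_conv_nth)
  moreover have "last ys = xs ! j" unfolding ys_def using ij by (auto simp: last_conv_nth)
  ultimately show False using acyc ij by metis
qed

lemma path_unique:
  "is_path adj xs \<Longrightarrow> is_path adj ys \<Longrightarrow> hd xs = hd ys \<Longrightarrow> last xs = last ys \<Longrightarrow> xs = ys"
proof (induction xs arbitrary: ys)
  case Nil thus ?case using is_path_nonempty by auto
next
  case (Cons a xs')
  obtain ys' where ys: "ys = a # ys'" using Cons(3,4) is_path_nonempty by (cases ys, auto)
  show ?case
  proof (cases "xs' = []")
    case True
    show ?thesis
    proof (cases "ys' = []")
      case False
      have "length ys \<ge> 2" using ys False by (cases ys', auto)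
      thus ?thesis using acyc[OF Cons(3)] Cons(5) True ys by auto
    qed (insert True ys, auto)
  next
    case False
    show ?thesis
    proof (cases "ys' = []")
      case True
      have "length (a # xs') \<ge> 2" using False by (cases xs', auto)
      thus ?thesis using acyc[OF Cons(2)] Cons(5) True ys by auto
    next
      case False2: False
      have px: "is_path adj xs'" using Cons(2) False by (auto simp: is_path_Cons)
      have py: "is_path adj ys'" using Cons(3) False2 ys by (auto simp: is_path_Cons)
      show ?thesis
      proof (cases "hd xs' = hd ys'")
        case True
        have "last xs' = last ys'" using Cons(5) ys False False2 by auto
        thus ?thesis using Cons.IH[OF px py True] ys by auto
      next
        case ne: False
        have "is_path adj (rev (a # xs') @ ys')"
        proof (rule is_path_append[OF rev_is_path[OF Cons(2)] py])
          show "adj (last (rev (a # xs'))) (hd ys')" using Cons(3) ys False2 by (auto simp: is_path_Cons)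
          show "rev (a # xs') ! (length (rev (a # xs')) - 2) \<noteq> hd ys'"
            using ne False by (simp add: nth_append rev_nth hd_conv_nth)
          show "last (rev (a # xs')) \<noteq> ys' ! 1" if "length ys' \<ge> 2"
            using is_path_no_backtrack[OF Cons(3), of 0] ys that by auto
        qed
        moreover have "length (rev (a # xs') @ ys') \<ge> 2" using False2 by (cases ys', auto)
        moreover have "hd (rev (a # xs') @ ys') = last (rev (a # xs') @ ys')"
          using Cons(5) ys False False2 by (auto simp: hd_rev)
        ultimately show ?thesis using acyc by blast
      qed
    qed
  qed
qed

definition tree_path :: "'v \<Rightarrow> 'v \<Rightarrow> 'v list" where
  "tree_path a b = (THE xs. is_path adj xs \<and> hd xs = a \<and> last xs = b)"

lemma tree_path: "is_path adj (tree_path a b)" "hd (tree_path a b) = a" "last (tree_path a b) = b"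
proof -
  obtain xs where xs: "is_path adj xs \<and> hd xs = a \<and> last xs = b" using connected by blast
  have "is_path adj (tree_path a b) \<and> hd (tree_path a b) = a \<and> last (tree_path a b) = b"
    unfolding tree_path_def by (rule theI[of _ xs], rule xs, insert xs path_unique, auto)
  thus "is_path adj (tree_path a b)" "hd (tree_path a b) = a" "last (tree_path a b) = b" by auto
qed

lemma tree_path_eq: "is_path adj xs \<Longrightarrow> hd xs = a \<Longrightarrow> last xs = b \<Longrightarrow> tree_path a b = xs"
  using path_unique tree_path by metis

lemma tree_path_nonempty: "tree_path a b \<noteq> []" using tree_path(1) is_path_nonempty by auto

definition dist :: "'v \<Rightarrow> 'v \<Rightarrow> nat" where "dist a b = length (tree_path a b) - 1"

lemma length_tree_path: "length (tree_path a b) = Suc (dist a b)"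
  unfolding dist_def using tree_path_nonempty by (cases "tree_path a b", auto)

lemma tree_path_nth_0: "tree_path a b ! 0 = a" using tree_path(2) tree_path_nonempty by (metis hd_conv_nth)
lemma tree_path_nth_dist: "tree_path a b ! dist a b = b" using tree_path(3) tree_path_nonempty length_tree_path by (metis last_conv_nth diff_Suc_1)

lemma tree_path_refl[simp]: "tree_path a a = [a]" using tree_path_eq[of "[a]" a a] by auto
lemma dist_refl[simp]: "dist a a = 0" unfolding dist_def by simp

lemma dist_eq_0_iff: "dist a b = 0 \<longleftrightarrow> a = b"
proof
  assume "dist a b = 0"
  hence "length (tree_path a b) = 1" using length_tree_path by auto
  then obtain x where "tree_path a b = [x]" by (cases "tree_path a b", auto)
  thus "a = b" using tree_path(2,3)[of a b] by auto
qed auto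

lemma tree_path_via_path:
  assumes p: "is_path adj xs" and k: "k < length xs" and c: "xs ! k = c"
  shows "tree_path c (hd xs) = rev (take (Suc k) xs)" "tree_path c (last xs) = drop k xs"
    "dist c (hd xs) = k" "dist c (last xs) = length xs - 1 - k"
proof -
  have ne: "xs \<noteq> []" using is_path_nonempty[OF p] .
  have t1: "take (Suc k) xs \<noteq> []" using ne by auto
  have t2: "last (take (Suc k) xs) = xs ! k" using k by (simp add: take_Suc_conv_app_nth)
  have t3: "hd (take (Suc k) xs) = hd xs" using ne by simp
  show 1: "tree_path c (hd xs) = rev (take (Suc k) xs)"
    by (rule tree_path_eq, rule rev_is_path, rule is_path_take[OF p], insert t1 t2 t3 c, auto simp: hd_rev last_rev)
  show 2: "tree_path c (last xs) = drop k xs"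
    by (rule tree_path_eq, rule is_path_drop[OF p k], insert k c, auto simp: hd_drop_conv_nth)
  show "dist c (hd xs) = k" unfolding dist_def 1 using k by auto
  show "dist c (last xs) = length xs - 1 - k" unfolding dist_def 2 using k by auto
qed

lemma adj_tree_path_cases:
  assumes a: "adj u w"
  shows "(tree_path c w = tree_path c u @ [w] \<and> dist c w = Suc (dist c u)) \<or>
         (tree_path c u = tree_path c w @ [u] \<and> dist c u = Suc (dist c w))"
proof -
  let ?g = "tree_path c u"
  show ?thesis
  proof (cases "length ?g \<ge> 2 \<and> ?g ! (length ?g - 2) = w")
    case True
    let ?h = "take (length ?g - 1) ?g"
    have ph: "is_path adj ?h" using tree_path(1) True by (intro is_path_take, auto)
    have l2: "length ?g - 1 = Suc (length ?g - 2)" using True by auto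
    have "last ?h = ?g ! (length ?g - 2)" unfolding l2
      using True by (subst take_Suc_conv_app_nth, auto)
    moreover have "hd ?h = hd ?g" unfolding l2 by simp
    ultimately have "tree_path c w = ?h" using tree_path_eq[OF ph, of c w] True tree_path(2)[of c u] by simp
    moreover have "?g = ?h @ [u]" using tree_path(3)[of c u] tree_path_nonempty[of c u]
      by (metis append_butlast_last_id butlast_conv_take)
    ultimately show ?thesis unfolding dist_def using tree_path_nonempty[of c w] by auto
  next
    case False
    have "is_path adj (?g @ [w])"
      by (rule is_path_append[OF tree_path(1)], insert False a tree_path(3)[of c u], simp_all)
    moreover have "hd (?g @ [w]) = c" using tree_path(2)[of c u] tree_path_nonempty[of c u] by simp
    ultimately have "tree_path c w = ?g @ [w]" using tree_path_eq[of "?g @ [w]" c w] by simp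
    thus ?thesis unfolding dist_def using tree_path_nonempty[of c u] by auto
  qed
qed

lemma adj_dist_Suc: "adj u w \<Longrightarrow> dist c w = Suc (dist c u) \<or> dist c u = Suc (dist c w)"
  using adj_tree_path_cases by blast

definition branch :: "'v \<Rightarrow> 'v \<Rightarrow> 'v" where "branch c v = tree_path c v ! 1"

lemma length_tree_path_ge_2: assumes "v \<noteq> c" shows "length (tree_path c v) \<ge> 2"
proof -
  have "dist c v \<noteq> 0" using dist_eq_0_iff[of c v] assms by auto
  thus ?thesis using length_tree_path[of c v] by simp
qed

lemma adj_branch: assumes "v \<noteq> c" shows "adj c (branch c v)"
proof -
  have "Suc 0 < length (tree_path c v)" using length_tree_path_ge_2[OF assms] by simp
  from is_path_adj_nth[OF tree_path(1) this] show ?thesis unfolding branch_def using tree_path_nth_0[of c v] by simp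
qed

lemma branch_adj_eq:
  assumes a: "adj u w" and "u \<noteq> c" "w \<noteq> c" shows "branch c u = branch c w"
proof -
  have l: "Suc 0 < length (tree_path c u)" "Suc 0 < length (tree_path c w)"
    using length_tree_path_ge_2[OF assms(2)] length_tree_path_ge_2[OF assms(3)] by auto
  from adj_tree_path_cases[OF a, of c] show ?thesis
  proof
    assume "tree_path c w = tree_path c u @ [w] \<and> dist c w = Suc (dist c u)"
    hence "tree_path c w ! 1 = tree_path c u ! 1" using l by (simp add: nth_append)
    thus ?thesis unfolding branch_def by simp
  next
    assume "tree_path c u = tree_path c w @ [u] \<and> dist c u = Suc (dist c w)"
    hence "tree_path c u ! 1 = tree_path c w ! 1" using l by (simp add: nth_append)
    thus ?thesis unfolding branch_def by simp
  qed
qed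

lemma tree_path_from_branch:
  assumes "v \<noteq> c"
  shows "tree_path (branch c v) v = tl (tree_path c v)" "dist (branch c v) v = dist c v - 1"
proof -
  have l: "1 < length (tree_path c v)" using length_tree_path_ge_2[OF assms] by simp
  have p: "is_path adj (drop 1 (tree_path c v))" using is_path_drop[OF tree_path(1) l] .
  have h: "hd (drop 1 (tree_path c v)) = branch c v" unfolding branch_def using l by (simp add: hd_drop_conv_nth)
  have la: "last (drop 1 (tree_path c v)) = v" using l tree_path(3)[of c v] by simp
  have "tree_path (branch c v) v = drop 1 (tree_path c v)" using tree_path_eq[OF p h la] .
  thus "tree_path (branch c v) v = tl (tree_path c v)" by (simp add: drop_Suc)
  thus "dist (branch c v) v = dist c v - 1" unfolding dist_def by simp
qed

lemma branch_path_const: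
  assumes p: "is_path adj xs" and nc: "c \<notin> set xs" and i: "i < length xs"
  shows "branch c (xs ! i) = branch c (xs ! 0)"
  using i
proof (induction i)
  case (Suc i)
  have "adj (xs ! i) (xs ! Suc i)" using is_path_adj_nth[OF p] Suc by auto
  moreover have "xs ! i \<noteq> c" "xs ! Suc i \<noteq> c" using nc Suc(2) by (auto simp: in_set_conv_nth)
  ultimately show ?case using branch_adj_eq Suc by auto
qed auto

lemma path_length_dist_bounds:
  "\<forall>c xs. dist c (hd xs) + dist c (last xs) = m \<longrightarrow> is_path adj xs \<longrightarrow>
     length xs - 1 \<le> m \<and> (c \<notin> set xs \<longrightarrow> length xs + 1 \<le> m)"
proof (induction m rule: less_induct)
  case (less m)
  show ?case
  proof (intro allI impI)
    fix c xs assume m: "dist c (hd xs) + dist c (last xs) = m" and p: "is_path adj xs"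
    have ne: "xs \<noteq> []" using is_path_nonempty[OF p] .
    show "length xs - 1 \<le> m \<and> (c \<notin> set xs \<longrightarrow> length xs + 1 \<le> m)"
    proof (cases "c \<in> set xs")
      case True
      then obtain k where k: "k < length xs" "xs ! k = c" by (auto simp: in_set_conv_nth)
      show ?thesis using tree_path_via_path[OF p k] m True by auto
    next
      case False
      let ?c' = "branch c (xs ! 0)"
      have hn: "hd xs \<noteq> c" "last xs \<noteq> c" using False ne by auto
      have bh: "branch c (hd xs) = ?c'" using ne by (simp add: hd_conv_nth)
      have bl: "branch c (last xs) = ?c'" using branch_path_const[OF p False, of "length xs - 1"] ne
        by (simp add: last_conv_nth)
      have d1: "dist ?c' (hd xs) = dist c (hd xs) - 1" using tree_path_from_branch(2)[OF hn(1)] bh by simp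
      have d2: "dist ?c' (last xs) = dist c (last xs) - 1" using tree_path_from_branch(2)[OF hn(2)] bl by simp
      have p1: "dist c (hd xs) \<ge> 1" "dist c (last xs) \<ge> 1" using hn dist_eq_0_iff
        by (metis less_one not_le)+
      have "dist ?c' (hd xs) + dist ?c' (last xs) < m" using d1 d2 p1 m by auto
      from less[OF this, rule_format, OF refl p]
      have "length xs - 1 \<le> dist ?c' (hd xs) + dist ?c' (last xs)" by auto
      thus ?thesis using d1 d2 p1 m ne by (cases xs, auto)
    qed
  qed
qed

lemma path_length_le_dist: "is_path adj xs \<Longrightarrow> length xs - 1 \<le> dist c (hd xs) + dist c (last xs)"
  using path_length_dist_bounds by blast

lemma path_length_avoiding_le_dist: "is_path adj xs \<Longrightarrow> c \<notin> set xs \<Longrightarrow> length xs + 1 \<le> dist c (hd xs) + dist c (last xs)"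
  using path_length_dist_bounds by blast

lemma tl_tree_path:
  assumes vc: "v \<noteq> c"
  shows "is_path adj (tl (tree_path c v))" "hd (tl (tree_path c v)) = branch c v" "tl (tree_path c v) \<noteq> []"
    "tree_path c v = c # tl (tree_path c v)"
proof -
  have l: "1 < length (tree_path c v)" using length_tree_path_ge_2[OF vc] by simp
  show "is_path adj (tl (tree_path c v))" using is_path_drop[OF tree_path(1) l] by (simp add: drop_Suc)
  show "hd (tl (tree_path c v)) = branch c v" unfolding branch_def using hd_tl_nth[OF l] .
  show "tl (tree_path c v) \<noteq> []" using l by (cases "tree_path c v", auto)
  show "tree_path c v = c # tl (tree_path c v)" using tree_path_nonempty[of c v] tree_path(2)[of c v] by (cases "tree_path c v", auto)
qed

lemma join_tree_paths:
  assumes br: "u = c \<or> v = c \<or> branch c u \<noteq> branch c v"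
  defines "J \<equiv> rev (tree_path c u) @ tl (tree_path c v)"
  shows "is_path adj J" "hd J = u" "last J = v" "length J = dist c u + dist c v + 1"
    "set J = set (tree_path c u) \<union> set (tree_path c v)" "J ! dist c u = c"
proof -
  have gu: "tree_path c u \<noteq> []" "tree_path c v \<noteq> []" using tree_path_nonempty by auto
  have cv: "tree_path c v = c # tl (tree_path c v)" using gu(2) tree_path(2)[of c v] by (cases "tree_path c v", auto)
  have lr: "last (rev (tree_path c u)) = c" using gu(1) tree_path(2)[of c u] by (simp add: last_rev)
  show "is_path adj J"
  proof (cases "v = c")
    case True thus ?thesis unfolding J_def using rev_is_path[OF tree_path(1)] by simp
  next
    case vc: False
    note tv = tl_tree_path[OF vc]
    show ?thesis unfolding J_def
    proof (rule is_path_append[OF rev_is_path[OF tree_path(1)] tv(1)])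
      show "adj (last (rev (tree_path c u))) (hd (tl (tree_path c v)))"
        unfolding lr tv(2) using adj_branch[OF vc] .
      show "rev (tree_path c u) ! (length (rev (tree_path c u)) - 2) \<noteq> hd (tl (tree_path c v))"
        if l: "length (rev (tree_path c u)) \<ge> 2"
      proof -
        have uc: "u \<noteq> c" using l tree_path_refl[of c] by auto
        have "rev (tree_path c u) ! (length (rev (tree_path c u)) - 2) = tree_path c u ! 1"
          using l by (simp add: rev_nth numeral_2_eq_2)
        thus ?thesis unfolding tv(2) using br uc vc unfolding branch_def by auto
      qed
      show "last (rev (tree_path c u)) \<noteq> tl (tree_path c v) ! 1" if l: "length (tl (tree_path c v)) \<ge> 2"
      proof -
        have "Suc (Suc 0) < length (tree_path c v)" using l by auto
        from is_path_no_backtrack[OF tree_path(1) this] show ?thesis unfolding lr using tree_path_nth_0[of c v] l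
          by (simp add: nth_tl)
      qed
    qed
  qed
  show "hd J = u" unfolding J_def using gu tree_path(3)[of c u] by (simp add: hd_rev)
  show "last J = v"
  proof (cases "tl (tree_path c v) = []")
    case True
    hence "tree_path c v = [c]" using cv by simp
    hence "v = c" using tree_path(3)[of c v] by simp
    thus ?thesis unfolding J_def using True lr by simp
  next
    case False
    have "last (tl (tree_path c v)) = v" using False tree_path(3)[of c v] cv by (metis last_ConsR)
    thus ?thesis unfolding J_def using False by simp
  qed
  show "length J = dist c u + dist c v + 1" unfolding J_def using length_tree_path[of c u] length_tree_path[of c v] by simp
  show "set J = set (tree_path c u) \<union> set (tree_path c v)"
  proof -
    have "set (tree_path c v) = insert c (set (tl (tree_path c v)))" using cv by (metis list.simps(15))
    moreover have "c \<in> set (tree_path c u)" using gu(1) tree_path(2)[of c u] by (metis hd_in_set)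
    ultimately show ?thesis unfolding J_def by auto
  qed
  show "J ! dist c u = c" unfolding J_def using length_tree_path[of c u] tree_path_nth_0[of c u]
    by (simp add: nth_append rev_nth)
qed

lemma dist_on_path:
  assumes p: "is_path adj xs" and k: "k < length xs" and c: "xs ! k = c" and j: "j < length xs"
  shows "dist c (xs ! j) = (if j \<le> k then k - j else j - k)"
proof (cases "j \<le> k")
  case True
  let ?ys = "drop j xs"
  have py: "is_path adj ?ys" using is_path_drop[OF p j] .
  have "dist c (hd ?ys) = k - j" using tree_path_via_path(3)[OF py, of "k - j" c] k c True by simp
  moreover have "hd ?ys = xs ! j" using j by (simp add: hd_drop_conv_nth)
  ultimately show ?thesis using True by simp
next
  case False
  let ?ys = "take (Suc j) xs"
  have py: "is_path adj ?ys" using is_path_take[OF p, of "Suc j"] by simp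
  have "dist c (last ?ys) = length ?ys - 1 - k" using tree_path_via_path(4)[OF py, of k c] k c False j by simp
  moreover have "last ?ys = xs ! j" using j by (simp add: take_Suc_conv_app_nth)
  ultimately show ?thesis using False j by simp
qed

lemma branch_on_path:
  assumes p: "is_path adj xs" and k: "k < length xs" and c: "xs ! k = c" and j: "j < length xs"
  shows "j < k \<Longrightarrow> branch c (xs ! j) = xs ! (k - 1)" "k < j \<Longrightarrow> branch c (xs ! j) = xs ! Suc k"
proof -
  assume jk: "j < k"
  let ?ys = "drop j xs"
  have py: "is_path adj ?ys" using is_path_drop[OF p j] .
  have g: "tree_path c (hd ?ys) = rev (take (Suc (k - j)) ?ys)" using tree_path_via_path(1)[OF py, of "k - j" c] k c jk by simp
  have h: "hd ?ys = xs ! j" using j by (simp add: hd_drop_conv_nth)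
  have "branch c (xs ! j) = rev (take (Suc (k - j)) ?ys) ! 1" unfolding branch_def using g h by simp
  also have "\<dots> = xs ! (k - 1)" using jk k by (simp add: rev_nth)
  finally show "branch c (xs ! j) = xs ! (k - 1)" .
next
  assume kj: "k < j"
  let ?ys = "take (Suc j) xs"
  have py: "is_path adj ?ys" using is_path_take[OF p, of "Suc j"] by simp
  have g: "tree_path c (last ?ys) = drop k ?ys" using tree_path_via_path(2)[OF py, of k c] k c kj j by simp
  have l: "last ?ys = xs ! j" using j by (simp add: take_Suc_conv_app_nth)
  have "branch c (xs ! j) = drop k ?ys ! 1" unfolding branch_def using g l by simp
  also have "\<dots> = xs ! Suc k" using kj j by simp
  finally show "branch c (xs ! j) = xs ! Suc k" .
qed

lemma length_path_le_card: assumes "is_path adj xs" "set xs \<subseteq> A" "finite A" shows "length xs \<le> card A"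
  using distinct_path[OF assms(1)] assms(2,3) by (metis card_mono distinct_card)

lemma finite_path_lengths:
  assumes fin: "finite (supp M)"
  shows "finite {length xs - 1 | xs. is_path adj xs \<and> set xs \<subseteq> supp M}"
proof -
  have "{length xs - 1 | xs. is_path adj xs \<and> set xs \<subseteq> supp M} \<subseteq> {0..card (supp M)}"
  proof
    fix l assume "l \<in> {length xs - 1 | xs. is_path adj xs \<and> set xs \<subseteq> supp M}"
    then obtain xs where "l = length xs - 1" "is_path adj xs" "set xs \<subseteq> supp M" by blast
    thus "l \<in> {0..card (supp M)}" using length_path_le_card[of xs "supp M"] fin by simp
  qed
  thus ?thesis using finite_subset by blast
qed

lemma length_path_le_diam:
  assumes fin: "finite (supp M)" and p: "is_path adj xs" and s: "set xs \<subseteq> supp M"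
  shows "length xs - 1 \<le> diam adj M"
  unfolding diam_def by (rule Max_ge[OF finite_path_lengths[OF fin]], insert p s, blast)

lemma diam_attained:
  assumes fin: "finite (supp M)" and ne: "supp M \<noteq> {}"
  shows "diam adj M \<in> {length xs - 1 | xs. is_path adj xs \<and> set xs \<subseteq> supp M}"
proof -
  obtain a where a: "a \<in> supp M" using ne by auto
  have "0 \<in> {length xs - 1 | xs. is_path adj xs \<and> set xs \<subseteq> supp M}"
    by (rule CollectI, rule exI[of _ "[a]"], insert a, simp)
  hence "{length xs - 1 | xs. is_path adj xs \<and> set xs \<subseteq> supp M} \<noteq> {}" by blast
  thus ?thesis unfolding diam_def by (rule Max_in[OF finite_path_lengths[OF fin]])
qed

lemma diam_le_bound:
  assumes fin: "finite (supp M)" and ne: "supp M \<noteq> {}"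
    and b: "\<And>xs. is_path adj xs \<Longrightarrow> set xs \<subseteq> supp M \<Longrightarrow> length xs - 1 \<le> K"
  shows "diam adj M \<le> K"
proof -
  obtain xs where "diam adj M = length xs - 1" "is_path adj xs" "set xs \<subseteq> supp M"
    using diam_attained[OF fin ne] by blast
  thus ?thesis using b by simp
qed

lemma diam_path_exists:
  assumes fin: "finite (supp M)" and ne: "supp M \<noteq> {}"
  shows "\<exists>xs. diam_path adj M xs"
  using diam_attained[OF fin ne] unfolding diam_path_def by auto

lemma branch_nb: "adj x a \<Longrightarrow> branch x a = a"
proof -
  assume a: "adj x a"
  have "is_path adj [x, a]" using a irr by (auto simp: is_path_Cons)
  hence "tree_path x a = [x, a]" by (intro tree_path_eq, auto)
  thus ?thesis unfolding branch_def by simp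
qed

end

lemma regular_tree_tree: "regular_tree n adj \<Longrightarrow> tree adj"
  unfolding regular_tree_def tree_def by blast

lemma part_path_nth:
  assumes b: "bipartite adj part" and p: "is_path adj xs" and i: "i < length xs"
  shows "part (xs ! i) = (part (xs ! 0) = even i)"
  using i
proof (induction i)
  case (Suc i)
  have "adj (xs ! i) (xs ! Suc i)" using is_path_adj_nth[OF p] Suc by auto
  hence "part (xs ! Suc i) \<noteq> part (xs ! i)" using b unfolding bipartite_def by metis
  thus ?case using Suc by auto
qed auto

section \<open>Linear algebra\<close>

lemma mult_mat_vec_zero: "A \<in> carrier_mat m n \<Longrightarrow> A *\<^sub>v 0\<^sub>v n = 0\<^sub>v m"
  by (intro eq_vecI, auto simp: scalar_prod_def)

lemma mult_mat_vec_dim_0: "A \<in> carrier_mat m 0 \<Longrightarrow> v \<in> carrier_vec 0 \<Longrightarrow> A *\<^sub>v v = 0\<^sub>v m"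
  by (intro eq_vecI, auto simp: scalar_prod_def)

lemma mat_nontrivial_kernel:
  fixes A :: "'k::field mat"
  assumes A: "A \<in> carrier_mat n m" and nm: "n < m"
  shows "\<exists>v\<in>carrier_vec m. v \<noteq> 0\<^sub>v m \<and> A *\<^sub>v v = 0\<^sub>v n"
proof -
  define A' where "A' = mat\<^sub>r m m (\<lambda>i. if i = m - 1 then 0\<^sub>v m else (if i < n then row A i else 0\<^sub>v m))"
  have A'c: "A' \<in> carrier_mat m m" unfolding A'_def by auto
  have "det A' = 0" unfolding A'_def
    by (rule det_row_0, insert nm A, auto)
  then obtain v where v: "v \<in> carrier_vec m" "v \<noteq> 0\<^sub>v m" "A' *\<^sub>v v = 0\<^sub>v m"
    using det_0_iff_vec_prod_zero_field[OF A'c] by auto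
  have "A *\<^sub>v v = 0\<^sub>v n"
  proof (rule eq_vecI)
    fix i assume i: "i < dim_vec (0\<^sub>v n :: 'k vec)"
    hence i: "i < n" by auto
    have "(A' *\<^sub>v v) $ i = 0" using v(3) i nm by simp
    moreover have "(A' *\<^sub>v v) $ i = row A i \<bullet> v" using i nm A unfolding A'_def by auto
    ultimately show "(A *\<^sub>v v) $ i = (0\<^sub>v n :: 'k vec) $ i" using i A by auto
  qed (insert A, auto)
  thus ?thesis using v by blast
qed

lemma mat_injective_inverse:
  fixes A :: "'k::field mat"
  assumes A: "A \<in> carrier_mat n n" and inj: "\<And>v. v \<in> carrier_vec n \<Longrightarrow> A *\<^sub>v v = 0\<^sub>v n \<Longrightarrow> v = 0\<^sub>v n"
  shows "\<exists>B\<in>carrier_mat n n. A * B = 1\<^sub>m n \<and> B * A = 1\<^sub>m n"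
proof -
  have "det A \<noteq> 0" using det_0_iff_vec_prod_zero_field[OF A] inj by auto
  from det_non_zero_imp_unit[OF A this, of "()"]
  have "A \<in> Units (ring_mat TYPE('k) n ())" .
  thus ?thesis unfolding Units_def ring_mat_def by auto
qed

lemma invertible_mat_if_injective: 
  fixes A :: "'k::field mat"
  assumes A: "A \<in> carrier_mat n n" and inj: "\<And>v. v \<in> carrier_vec n \<Longrightarrow> A *\<^sub>v v = 0\<^sub>v n \<Longrightarrow> v = 0\<^sub>v n"
  shows "invertible_mat A"
proof -
  obtain B where "B\<in>carrier_mat n n" "A * B = 1\<^sub>m n" "B * A = 1\<^sub>m n" using mat_injective_inverse[OF assms] by blast
  thus ?thesis using A unfolding invertible_mat_def inverts_mat_def square_mat.simps by auto
qed

lemma surjective_mat_right_inverse: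
  fixes A :: "'k::field mat"
  assumes A: "A \<in> carrier_mat n m" and surj: "\<And>b. b \<in> carrier_vec n \<Longrightarrow> \<exists>x\<in>carrier_vec m. A *\<^sub>v x = b"
  shows "\<exists>B\<in>carrier_mat m n. A * B = 1\<^sub>m n"
proof -
  have "\<forall>i. \<exists>x. i < n \<longrightarrow> x \<in> carrier_vec m \<and> A *\<^sub>v x = unit_vec n i"
    using surj by (metis unit_vec_carrier)
  then obtain X where X: "\<And>i. i < n \<Longrightarrow> X i \<in> carrier_vec m \<and> A *\<^sub>v X i = unit_vec n i" by metis
  define B :: "'k mat" where "B = mat m n (\<lambda>(i,j). X j $ i)"
  have Bc: "B \<in> carrier_mat m n" unfolding B_def by auto
  have "A * B = 1\<^sub>m n"
  proof (rule eq_matI)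
    fix i j assume "i < dim_row (1\<^sub>m n :: 'k mat)" "j < dim_col (1\<^sub>m n :: 'k mat)"
    hence ij: "i < n" "j < n" by auto
    have "(A * B) $$ (i,j) = row A i \<bullet> col B j" using ij A Bc by auto
    also have "col B j = X j" unfolding B_def using ij X[OF ij(2)] by (auto intro!: eq_vecI)
    also have "row A i \<bullet> X j = (A *\<^sub>v X j) $ i" using ij A by auto
    also have "\<dots> = unit_vec n j $ i" using X ij by auto
    finally show "(A * B) $$ (i,j) = 1\<^sub>m n $$ (i,j)" using ij by auto
  qed (insert A Bc, auto)
  then show ?thesis using Bc by blast
qed

lemma surjective_mat_dim_le:
  fixes A :: "'k::field mat"
  assumes A: "A \<in> carrier_mat n m" and surj: "\<And>b. b \<in> carrier_vec n \<Longrightarrow> \<exists>x\<in>carrier_vec m. A *\<^sub>v x = b"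
  shows "n \<le> m"
proof (rule ccontr)
  assume "\<not> n \<le> m" hence mn: "m < n" by auto
  obtain B where Bc: "B \<in> carrier_mat m n" and AB: "A * B = 1\<^sub>m n"
    using surjective_mat_right_inverse[OF A surj] by blast
  obtain v where v: "v \<in> carrier_vec n" "v \<noteq> 0\<^sub>v n" "B *\<^sub>v v = 0\<^sub>v m"
    using mat_nontrivial_kernel[OF Bc mn] by blast
  have "v = (A * B) *\<^sub>v v" unfolding AB using v by auto
  also have "\<dots> = A *\<^sub>v (B *\<^sub>v v)" using A Bc v by (metis assoc_mult_mat_vec)
  also have "\<dots> = 0\<^sub>v n" using v A by auto
  finally show False using v by auto
qed

lemma pivot_fun_surjective:
  fixes C :: "'k::field mat"
  assumes C: "C \<in> carrier_mat n m" and piv: "pivot_fun C f m"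
    and no_zero_row: "\<And>i. i < n \<Longrightarrow> row C i \<noteq> 0\<^sub>v m" and b: "b \<in> carrier_vec n"
  shows "\<exists>x\<in>carrier_vec m. C *\<^sub>v x = b"
proof -
  have dim: "dim_row C = n" using C by auto
  note pv = pivot_funD[OF dim piv]
  have fl: "\<And>i. i < n \<Longrightarrow> f i < m"
    using no_zero_row pivot_fun_zero_row_iff[OF piv C] pv(1) le_neq_implies_less by blast
  have finj: "inj_on f {..<n}"
  proof (rule inj_onI)
    fix i i' assume "i \<in> {..<n}" "i' \<in> {..<n}" "f i = f i'"
    then show "i = i'" using pv(4)[of i'] pv(5)[of i i'] fl by fastforce
  qed
  \<comment> \<open>put the entries of b at the pivot columns\<close>
  define x where "x = vec m (\<lambda>j. if j \<in> f ` {..<n} then b $ (the_inv_into {..<n} f j) else 0)"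
  have "C *\<^sub>v x = b"
  proof (rule eq_vecI)
    fix i assume "i < dim_vec b"
    hence i: "i < n" using b by auto
    have "(C *\<^sub>v x) $ i = (\<Sum>j<m. C $$ (i,j) * x $ j)"
      using C i by (simp add: scalar_prod_def lessThan_atLeast0 x_def)
    also have "\<dots> = (\<Sum>j\<in>{f i}. C $$ (i,j) * x $ j)"
    proof (rule sum.mono_neutral_right)
      show "\<forall>j\<in>{..<m} - {f i}. C $$ (i, j) * x $ j = 0"
      proof
        fix j assume j: "j \<in> {..<m} - {f i}"
        show "C $$ (i, j) * x $ j = 0"
        proof (cases "j \<in> f ` {..<n}")
          case True
          then obtain i' where i': "i' < n" "j = f i'" by auto
          hence "C $$ (i,j) = 0" using pv(5)[OF i'(1) _ i] fl j by auto
          thus ?thesis by simp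
        next
          case False thus ?thesis using j unfolding x_def by auto
        qed
      qed
    qed (insert fl i, auto)
    also have "\<dots> = b $ i" using pv(4)[OF i] fl[OF i] i finj unfolding x_def
      by (auto simp: the_inv_into_f_f)
    finally show "(C *\<^sub>v x) $ i = b $ i" .
  qed (insert C b, auto)
  then show ?thesis unfolding x_def by auto
qed

lemma mat_surjective_or_annihilator:
  fixes A :: "'k::field mat"
  assumes A: "A \<in> carrier_mat n m"
  shows "(\<forall>b\<in>carrier_vec n. \<exists>x\<in>carrier_vec m. A *\<^sub>v x = b) \<or>
         (\<exists>u\<in>carrier_vec n. u \<noteq> 0\<^sub>v n \<and> (\<forall>x\<in>carrier_vec m. u \<bullet> (A *\<^sub>v x) = 0))"
proof -
  obtain C where C: "gauss_jordan_single A = C" by auto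
  note g = gauss_jordan_single[OF A C]
  from g(4) obtain P Q where CPA: "C = P * A" and P: "P \<in> carrier_mat n n" and Q: "Q \<in> carrier_mat n n"
    and PQ: "P * Q = 1\<^sub>m n" and QP: "Q * P = 1\<^sub>m n" by blast
  have Cc: "C \<in> carrier_mat n m" using g(2) .
  from g(3) obtain f where piv: "pivot_fun C f m" unfolding row_echelon_form_def using Cc by auto
  show ?thesis
  proof (cases "\<exists>i<n. row C i = 0\<^sub>v m")
    case True
    then obtain i where i: "i < n" "row C i = 0\<^sub>v m" by auto
    define u where "u = row P i"
    have u: "u \<in> carrier_vec n" unfolding u_def using P by auto
    have "u \<noteq> 0\<^sub>v n"
    proof
      assume u0: "u = 0\<^sub>v n"
      have "(P * Q) $$ (i,i) = row P i \<bullet> col Q i" using P Q i by auto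
      also have "\<dots> = 0" using u0 Q i unfolding u_def by auto
      finally show False using PQ i by auto
    qed
    moreover have "\<forall>x\<in>carrier_vec m. u \<bullet> (A *\<^sub>v x) = 0"
    proof
      fix x :: "'k vec" assume x: "x \<in> carrier_vec m"
      have "u \<bullet> (A *\<^sub>v x) = (P *\<^sub>v (A *\<^sub>v x)) $ i" unfolding u_def using P A i x by auto
      also have "P *\<^sub>v (A *\<^sub>v x) = C *\<^sub>v x" unfolding CPA using P A x by (metis assoc_mult_mat_vec)
      also have "(C *\<^sub>v x) $ i = row C i \<bullet> x" using Cc i by auto
      also have "\<dots> = 0" using i x by auto
      finally show "u \<bullet> (A *\<^sub>v x) = 0" .
    qed
    ultimately show ?thesis using u by blast
  next
    case False
    have "\<exists>x\<in>carrier_vec m. A *\<^sub>v x = b" if b: "b \<in> carrier_vec n" for b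
    proof -
      obtain x where x: "x \<in> carrier_vec m" "C *\<^sub>v x = P *\<^sub>v b"
        using pivot_fun_surjective[OF Cc piv _ mult_mat_vec_carrier[OF P b]] False by blast
      have "A = Q * C" using QP A unfolding CPA
        by (metis P Q assoc_mult_mat left_mult_one_mat)
      hence "A *\<^sub>v x = Q *\<^sub>v (P *\<^sub>v b)" using Q Cc x by (metis assoc_mult_mat_vec)
      also have "\<dots> = b" using QP Q P b by (metis assoc_mult_mat_vec one_mult_mat_vec)
      finally show ?thesis using x by blast
    qed
    thus ?thesis by blast
  qed
qed

lemma invertible_mat_with_last_row:
  fixes u :: "'k::field vec"
  assumes u: "u \<in> carrier_vec m" "u \<noteq> 0\<^sub>v m"
  obtains g where "g \<in> carrier_mat m m" "invertible_mat g" "row g (m - 1) = u"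
proof -
  obtain j0 where j0: "j0 < m" "u $ j0 \<noteq> 0" using u by (metis eq_vecI carrier_vecD index_zero_vec)
  \<comment> \<open>the other rows are the unit vectors e_l for l \<noteq> j0\<close>
  define sg where "sg = (\<lambda>i. if i < j0 then i else Suc i)"
  define g :: "'k mat" where "g = mat m m (\<lambda>(i,l). if i < m - 1 then (if l = sg i then 1 else 0) else u $ l)"
  have gc: "g \<in> carrier_mat m m" unfolding g_def by simp
  have rowg: "row g (m - 1) = u" unfolding g_def using j0 u(1) by (intro eq_vecI, auto)
  have ginj: "\<And>v. v \<in> carrier_vec m \<Longrightarrow> g *\<^sub>v v = 0\<^sub>v m \<Longrightarrow> v = 0\<^sub>v m"
  proof -
    fix v :: "'k vec" assume v: "v \<in> carrier_vec m" and z: "g *\<^sub>v v = 0\<^sub>v m"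
    have vl: "v $ l = 0" if l: "l < m" "l \<noteq> j0" for l
    proof -
      define i where "i = (if l < j0 then l else l - 1)"
      have i: "i < m - 1" "sg i = l" unfolding i_def sg_def using l j0 by auto
      have "(g *\<^sub>v v) $ i = row g i \<bullet> v" using gc i by auto
      also have "row g i = unit_vec m l" unfolding g_def using i l by (intro eq_vecI, auto)
      also have "unit_vec m l \<bullet> v = v $ l" using v l by simp
      finally show "v $ l = 0" using z i by simp
    qed
    have "0 = (g *\<^sub>v v) $ (m - 1)" using z j0 by simp
    also have "\<dots> = u \<bullet> v" using rowg gc j0 by simp
    also have "\<dots> = (\<Sum>l\<in>{0..<m}. u $ l * v $ l)" unfolding scalar_prod_def using v by simp
    also have "\<dots> = (\<Sum>l\<in>{j0}. u $ l * v $ l)"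
      by (rule sum.mono_neutral_right, insert vl j0, auto)
    finally have "v $ j0 = 0" using j0 by simp
    thus "v = 0\<^sub>v m" using vl v by (intro eq_vecI, auto)
  qed
  show ?thesis using that gc invertible_mat_if_injective[OF gc ginj] rowg by blast
qed

lemma square_mat_surjective_injective:
  fixes A :: "'k::field mat"
  assumes A: "A \<in> carrier_mat n n" and surj: "\<And>b. b \<in> carrier_vec n \<Longrightarrow> \<exists>x\<in>carrier_vec n. A *\<^sub>v x = b"
    and v: "v \<in> carrier_vec n" and z: "A *\<^sub>v v = 0\<^sub>v n"
  shows "v = 0\<^sub>v n"
proof -
  obtain B where Bc: "B \<in> carrier_mat n n" and AB: "A * B = 1\<^sub>m n"
    using surjective_mat_right_inverse[OF A surj] by blast
  have "det A * det B = 1" using det_mult[OF A Bc] AB by simp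
  hence "det A \<noteq> 0" by auto
  thus ?thesis using det_0_iff_vec_prod_zero_field[OF A] v z by auto
qed

lemma invertible_mat_one: "invertible_mat (1\<^sub>m n :: 'a::semiring_1 mat)"
  unfolding invertible_mat_def inverts_mat_def by (intro conjI exI[of _ "1\<^sub>m n"], auto)

lemma col_eq_mult_unit_vec: fixes A :: "'a::semiring_1 mat" assumes A: "A \<in> carrier_mat m n" and l: "l < n" shows "col A l = A *\<^sub>v unit_vec n l"
proof (rule eq_vecI)
  fix i assume "i < dim_vec (A *\<^sub>v unit_vec n l)"
  hence i: "i < m" using A by simp
  have "row A i \<bullet> unit_vec n l = row A i $ l" using scalar_prod_right_unit[OF l] .
  thus "col A l $ i = (A *\<^sub>v unit_vec n l) $ i" using A i l by simp
qed (insert A, simp)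

lemma surjective_mat_injective_iff:
  fixes A :: "'k::field mat"
  assumes A: "A \<in> carrier_mat n m" and surj: "\<And>b. b \<in> carrier_vec n \<Longrightarrow> \<exists>x\<in>carrier_vec m. A *\<^sub>v x = b"
  shows "(\<forall>v\<in>carrier_vec m. A *\<^sub>v v = 0\<^sub>v n \<longrightarrow> v = 0\<^sub>v m) \<longleftrightarrow> n = m"
proof
  assume inj: "\<forall>v\<in>carrier_vec m. A *\<^sub>v v = 0\<^sub>v n \<longrightarrow> v = 0\<^sub>v m"
  show "n = m"
  proof (rule ccontr)
    assume "n \<noteq> m"
    hence "n < m" using surjective_mat_dim_le[OF A surj] by simp
    from mat_nontrivial_kernel[OF A this] inj show False by blast
  qed
next
  assume "n = m"
  then have "A \<in> carrier_mat m m" and "\<And>b. b \<in> carrier_vec m \<Longrightarrow> \<exists>x\<in>carrier_vec m. A *\<^sub>v x = b"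
    using A surj by auto
  then show "\<forall>v\<in>carrier_vec m. A *\<^sub>v v = 0\<^sub>v n \<longrightarrow> v = 0\<^sub>v m"
    using square_mat_surjective_injective \<open>n = m\<close> by blast
qed

section \<open>Sink maps of representations\<close>

lemma four_block_mat_of_block_diagonal:
  fixes G :: "'a::zero mat"
  assumes G: "G \<in> carrier_mat (r1 + r2) (c1 + c2)"
    and off: "\<And>i l. i < r1 + r2 \<Longrightarrow> l < c1 + c2 \<Longrightarrow> (i < r1) \<noteq> (l < c1) \<Longrightarrow> G $$ (i,l) = 0"
  shows "G = four_block_mat (mat r1 c1 (\<lambda>(i,l). G $$ (i,l))) (0\<^sub>m r1 c2)
    (0\<^sub>m r2 c1) (mat r2 c2 (\<lambda>(i,l). G $$ (i + r1, l + c1)))"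
proof (rule eq_matI)
  fix i l assume "i < dim_row (four_block_mat (mat r1 c1 (\<lambda>(i,l). G $$ (i,l))) (0\<^sub>m r1 c2)
    (0\<^sub>m r2 c1) (mat r2 c2 (\<lambda>(i,l). G $$ (i + r1, l + c1))))"
    and "l < dim_col (four_block_mat (mat r1 c1 (\<lambda>(i,l). G $$ (i,l))) (0\<^sub>m r1 c2)
    (0\<^sub>m r2 c1) (mat r2 c2 (\<lambda>(i,l). G $$ (i + r1, l + c1))))"
  hence il: "i < r1 + r2" "l < c1 + c2" by auto
  show "G $$ (i,l) = four_block_mat (mat r1 c1 (\<lambda>(i,l). G $$ (i,l))) (0\<^sub>m r1 c2)
    (0\<^sub>m r2 c1) (mat r2 c2 (\<lambda>(i,l). G $$ (i + r1, l + c1))) $$ (i,l)"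
    using il off[OF il] by (cases "i < r1"; cases "l < c1"; simp)
qed (use G in auto)

lemma block_diagonal_not_indecomposable:
  fixes M :: "('v,'k::field) rep"
  assumes bip: "bipartite adj part" and wf: "rep_wf adj part M"
    and pq: "\<And>a. p a + q a = dimv M a"
    and fc: "\<And>a. f a \<in> carrier_mat (dimv M a) (dimv M a)"
    and fi: "\<And>a. invertible_mat (f a)"
    and fs: "\<And>a. part a \<noteq> orient M \<Longrightarrow> f a = 1\<^sub>m (dimv M a)"
    and z: "\<And>a b i l. adj a b \<Longrightarrow> part b = orient M \<Longrightarrow> i < dimv M b \<Longrightarrow> l < dimv M a \<Longrightarrow>
             (i < p b) \<noteq> (l < p a) \<Longrightarrow> (f b * mapr M a b) $$ (i,l) = 0"
    and np: "p a0 \<noteq> 0" and nq: "q a1 \<noteq> 0"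
  shows "\<not> indecomposable adj part M"
proof -
  define G where "G = (\<lambda>a b. f b * mapr M a b)"
  have z': "\<And>a b i l. adj a b \<Longrightarrow> part b = orient M \<Longrightarrow> i < dimv M b \<Longrightarrow> l < dimv M a \<Longrightarrow>
             (i < p b) \<noteq> (l < p a) \<Longrightarrow> G a b $$ (i,l) = 0" unfolding G_def by (rule z)
  define M1 :: "('v,'k) rep" where "M1 = \<lparr> orient = orient M, dimv = p,
     mapr = (\<lambda>a b. mat (p b) (p a) (\<lambda>(i,l). G a b $$ (i,l))) \<rparr>"
  define M2 :: "('v,'k) rep" where "M2 = \<lparr> orient = orient M, dimv = q,
     mapr = (\<lambda>a b. mat (q b) (q a) (\<lambda>(i,l). G a b $$ (i + p b, l + p a))) \<rparr>"
  have fin: "finite (supp M)" using wf unfolding rep_wf_def by auto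
  have w1: "rep_wf adj part M1" unfolding rep_wf_def
  proof
    have "supp M1 \<subseteq> supp M"
    proof
      fix a assume "a \<in> supp M1"
      hence "p a \<noteq> 0" unfolding supp_def M1_def by simp
      thus "a \<in> supp M" unfolding supp_def using pq[of a] by simp
    qed
    thus "finite (supp M1)" using fin finite_subset by auto
  qed (auto simp: M1_def)
  have w2: "rep_wf adj part M2" unfolding rep_wf_def
  proof
    have "supp M2 \<subseteq> supp M"
    proof
      fix a assume "a \<in> supp M2"
      hence "q a \<noteq> 0" unfolding supp_def M2_def by simp
      thus "a \<in> supp M" unfolding supp_def using pq[of a] by simp
    qed
    thus "finite (supp M2)" using fin finite_subset by auto
  qed (auto simp: M2_def)
  have n1: "\<not> Defs.is_zero M1" unfolding Defs.is_zero_def M1_def using np by auto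
  have n2: "\<not> Defs.is_zero M2" unfolding Defs.is_zero_def M2_def using nq by auto
  have iso: "rep_iso adj part M (dsum M1 M2)"
    unfolding rep_iso_def
  proof (intro conjI exI[of _ f] allI impI)
    show "orient (dsum M1 M2) = orient M" unfolding dsum_def M1_def by simp
    fix a
    have "dimv (dsum M1 M2) a = p a + q a" unfolding dsum_def M1_def M2_def by simp
    thus "f a \<in> carrier_mat (dimv (dsum M1 M2) a) (dimv M a)" using fc[of a] pq[of a] by simp
    show "invertible_mat (f a)" by (rule fi)
  next
    fix a b assume ab: "adj a b \<and> part b = orient M"
    have pa: "part a \<noteq> orient M" using ab bip unfolding bipartite_def by metis
    have Mab: "mapr M a b \<in> carrier_mat (dimv M b) (dimv M a)" using wf ab unfolding rep_wf_def by auto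
    let ?F = "four_block_mat (mapr M1 a b) (0\<^sub>m (dimv M1 b) (dimv M2 a))
          (0\<^sub>m (dimv M2 b) (dimv M1 a)) (mapr M2 a b)"
    have mds: "mapr (dsum M1 M2) a b = ?F" unfolding dsum_def by simp
    have c1: "mapr M1 a b \<in> carrier_mat (p b) (p a)" unfolding M1_def by simp
    have c2: "mapr M2 a b \<in> carrier_mat (q b) (q a)" unfolding M2_def by simp
    have Fc: "?F \<in> carrier_mat (dimv M b) (dimv M a)"
      using four_block_carrier_mat[OF c1 c2] unfolding pq by (simp add: M1_def M2_def)
    have "mapr (dsum M1 M2) a b * f a = ?F" unfolding mds fs[OF pa] using right_mult_one_mat[OF Fc] .
    have Gc: "G a b \<in> carrier_mat (p b + q b) (p a + q a)" unfolding G_def pq using fc[of b] Mab by auto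
    have "G a b = four_block_mat (mat (p b) (p a) (\<lambda>(i,l). G a b $$ (i,l))) (0\<^sub>m (p b) (q a))
        (0\<^sub>m (q b) (p a)) (mat (q b) (q a) (\<lambda>(i,l). G a b $$ (i + p b, l + p a)))"
      by (rule four_block_mat_of_block_diagonal[OF Gc]) (use z' ab pq in auto)
    also have "\<dots> = ?F" by (simp add: M1_def M2_def)
    finally have "G a b = ?F" .
    moreover note \<open>mapr (dsum M1 M2) a b * f a = ?F\<close>
    ultimately show "f b * mapr M a b = mapr (dsum M1 M2) a b * f a" unfolding G_def by simp
  qed
  have o1: "orient M1 = orient M" "orient M2 = orient M" unfolding M1_def M2_def by auto
  show ?thesis unfolding indecomposable_def using w1 w2 n1 n2 iso o1 by blast
qed

definition nb_vecs :: "('v \<Rightarrow> 'v \<Rightarrow> bool) \<Rightarrow> ('v,'k::field) rep \<Rightarrow> 'v \<Rightarrow> ('v \<Rightarrow> 'k vec) \<Rightarrow> bool" where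
  "nb_vecs adj M x w \<longleftrightarrow> (\<forall>y. adj y x \<longrightarrow> w y \<in> carrier_vec (dimv M y))"

definition nb_sum :: "('v \<Rightarrow> 'v \<Rightarrow> bool) \<Rightarrow> ('v,'k::field) rep \<Rightarrow> 'v \<Rightarrow> ('v \<Rightarrow> 'k vec) \<Rightarrow> nat \<Rightarrow> 'k" where
  "nb_sum adj M x w i = (\<Sum>y\<in>{y. adj y x}. (mapr M y x *\<^sub>v w y) $ i)"

definition inj_at :: "('v \<Rightarrow> 'v \<Rightarrow> bool) \<Rightarrow> ('v,'k::field) rep \<Rightarrow> 'v \<Rightarrow> bool" where
  "inj_at adj M x \<longleftrightarrow> (\<forall>w. nb_vecs adj M x w \<and> (\<forall>i<dimv M x. nb_sum adj M x w i = 0) \<longrightarrow>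
      (\<forall>y. adj y x \<longrightarrow> w y = 0\<^sub>v (dimv M y)))"

definition surj_at :: "('v \<Rightarrow> 'v \<Rightarrow> bool) \<Rightarrow> ('v,'k::field) rep \<Rightarrow> 'v \<Rightarrow> bool" where
  "surj_at adj M x \<longleftrightarrow> (\<forall>z\<in>carrier_vec (dimv M x). \<exists>w. nb_vecs adj M x w \<and>
      (\<forall>i<dimv M x. nb_sum adj M x w i = z $ i))"

lemma is_sigmaD:
  assumes "is_sigma adj part M N"
  shows "rep_wf adj part N" "orient N = (\<not> orient M)"
     "\<And>y. part y \<noteq> orient M \<Longrightarrow> dimv N y = dimv M y"
     "\<And>x. part x = orient M \<Longrightarrow>
        (\<forall>v\<in>carrier_vec (dimv N x).
            (\<forall>y. adj x y \<longrightarrow> mapr N x y *\<^sub>v v = 0\<^sub>v (dimv M y)) \<longrightarrow> v = 0\<^sub>v (dimv N x))"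
     "\<And>x. part x = orient M \<Longrightarrow> (\<forall>v\<in>carrier_vec (dimv N x). \<forall>i < dimv M x.
            (\<Sum>y\<in>{y. adj y x}. (mapr M y x *\<^sub>v (mapr N x y *\<^sub>v v)) $ i) = 0)"
     "\<And>x. part x = orient M \<Longrightarrow> (\<forall>w. (\<forall>y. adj y x \<longrightarrow> w y \<in> carrier_vec (dimv M y)) \<and>
             (\<forall>i < dimv M x. (\<Sum>y\<in>{y. adj y x}. (mapr M y x *\<^sub>v w y) $ i) = 0) \<longrightarrow>
             (\<exists>v\<in>carrier_vec (dimv N x). \<forall>y. adj x y \<longrightarrow> mapr N x y *\<^sub>v v = w y))"
  using assms unfolding is_sigma_def by blast+

lemma sigma_dim_eq_0_iff_inj_at:
  fixes M N :: "('v,'k::field) rep"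
  assumes sym: "\<And>a b. adj a b \<Longrightarrow> adj b a" and bip: "bipartite adj part"
    and sig: "is_sigma adj part M N" and x: "part x = orient M"
  shows "dimv N x = 0 \<longleftrightarrow> inj_at adj M x"
proof -
  note sd = is_sigmaD[OF sig]
  have py: "\<And>y. adj y x \<Longrightarrow> part y \<noteq> orient M" using bip x unfolding bipartite_def by metis
  have dN: "\<And>y. adj y x \<Longrightarrow> dimv N y = dimv M y" using sd(3) py by blast
  have cN: "\<And>y. adj y x \<Longrightarrow> mapr N x y \<in> carrier_mat (dimv N y) (dimv N x)"
  proof -
    fix y assume a: "adj y x"
    have "part y = orient N" using py[OF a] sd(2) by auto
    thus "mapr N x y \<in> carrier_mat (dimv N y) (dimv N x)" using sd(1) sym[OF a] unfolding rep_wf_def by blast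
  qed
  note c1 = sd(4)[OF x] and c2 = sd(5)[OF x] and c3 = sd(6)[OF x]
  show ?thesis
  proof
    assume d0: "dimv N x = 0"
    show "inj_at adj M x" unfolding inj_at_def
    proof (intro allI impI)
      fix w y assume w: "nb_vecs adj M x w \<and> (\<forall>i<dimv M x. nb_sum adj M x w i = 0)" and y: "adj y x"
      have "(\<forall>y. adj y x \<longrightarrow> w y \<in> carrier_vec (dimv M y)) \<and>
             (\<forall>i < dimv M x. (\<Sum>y\<in>{y. adj y x}. (mapr M y x *\<^sub>v w y) $ i) = 0)"
        using w unfolding nb_vecs_def nb_sum_def by simp
      from c3[rule_format, OF this] obtain v where v: "v\<in>carrier_vec (dimv N x)"
        "\<forall>y. adj x y \<longrightarrow> mapr N x y *\<^sub>v v = w y" by blast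
      have "w y = mapr N x y *\<^sub>v v" using v(2) sym[OF y] by auto
      also have "v = 0\<^sub>v 0" using v(1) d0 by auto
      also have "mapr N x y *\<^sub>v 0\<^sub>v 0 = 0\<^sub>v (dimv M y)" using cN[OF y] d0 dN[OF y]
        by (metis mult_mat_vec_zero)
      finally show "w y = 0\<^sub>v (dimv M y)" .
    qed
  next
    assume inj: "inj_at adj M x"
    show "dimv N x = 0"
    proof (rule ccontr)
      assume "dimv N x \<noteq> 0"
      define v :: "'k vec" where "v = unit_vec (dimv N x) 0"
      have v: "v \<in> carrier_vec (dimv N x)" "v \<noteq> 0\<^sub>v (dimv N x)" unfolding v_def using \<open>dimv N x \<noteq> 0\<close>
        by (auto simp: unit_vec_def vec_eq_iff)
      define w where "w = (\<lambda>y. mapr N x y *\<^sub>v v)"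
      have "nb_vecs adj M x w" unfolding nb_vecs_def w_def
      proof (intro allI impI)
        fix y assume "adj y x"
        thus "mapr N x y *\<^sub>v v \<in> carrier_vec (dimv M y)" using cN[of y] dN[of y] v(1)
          by (simp add: mult_mat_vec_carrier)
      qed
      moreover have "\<forall>i<dimv M x. nb_sum adj M x w i = 0" unfolding nb_sum_def w_def
        using c2[rule_format, OF v(1)] by simp
      ultimately have "\<forall>y. adj y x \<longrightarrow> w y = 0\<^sub>v (dimv M y)" using inj unfolding inj_at_def by blast
      hence "\<forall>y. adj x y \<longrightarrow> mapr N x y *\<^sub>v v = 0\<^sub>v (dimv M y)" unfolding w_def using sym by blast
      thus False using c1 v by blast
    qed
  qed
qed

lemma inj_at_if_nbs_zero:
  assumes d: "\<And>y. adj y x \<Longrightarrow> dimv M y = 0"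
  shows "inj_at adj M x"
  unfolding inj_at_def
proof (intro allI impI)
  fix w y assume w: "nb_vecs adj M x w \<and> (\<forall>i<dimv M x. nb_sum adj M x w i = 0)" and y: "adj y x"
  have "w y \<in> carrier_vec (dimv M y)" using w y unfolding nb_vecs_def by blast
  hence "dim_vec (w y) = 0" using d[OF y] by (simp only: carrier_vec_def mem_Collect_eq)
  thus "w y = 0\<^sub>v (dimv M y)" using d[OF y] by (simp only: vec_of_dim_0)
qed

lemma not_inj_at_if_new_nb:
  fixes M :: "('v,'k::field) rep"
  assumes x0: "dimv M x = 0" and y: "adj y x" "dimv M y \<noteq> 0"
  shows "\<not> inj_at adj M x"
proof
  assume inj: "inj_at adj M x"
  define w where "w = (\<lambda>y'. if y' = y then unit_vec (dimv M y) 0 else 0\<^sub>v (dimv M y') :: 'k vec)"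
  have t: "nb_vecs adj M x w" unfolding nb_vecs_def w_def by auto
  have "w y = 0\<^sub>v (dimv M y)" using inj[unfolded inj_at_def, rule_format, of w y] t x0 y(1) by simp
  moreover have "w y $ 0 = 1" unfolding w_def using y by simp
  ultimately show False using y by simp
qed

definition nb_coords :: "('v \<Rightarrow> 'v \<Rightarrow> bool) \<Rightarrow> ('v,'k) rep \<Rightarrow> 'v \<Rightarrow> ('v \<times> nat) set" where
  "nb_coords adj M x = (SIGMA y:{y. adj y x}. {..<dimv M y})"

definition nb_sum_mat :: "('v,'k::field) rep \<Rightarrow> 'v \<Rightarrow> (nat \<Rightarrow> 'v \<times> nat) \<Rightarrow> nat \<Rightarrow> 'k mat" where
  "nb_sum_mat M x e D = mat (dimv M x) D (\<lambda>(i,j). mapr M (fst (e j)) x $$ (i, snd (e j)))"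

definition nb_coord_mat :: "('v,'k::field) rep \<Rightarrow> (nat \<Rightarrow> 'v \<times> nat) \<Rightarrow> nat \<Rightarrow> 'v \<Rightarrow> 'k mat" where
  "nb_coord_mat M e D y = mat D (dimv M y) (\<lambda>(j,l). if e j = (y,l) then 1 else 0)"

definition stack :: "(nat \<Rightarrow> 'v \<times> nat) \<Rightarrow> nat \<Rightarrow> ('v \<Rightarrow> 'k vec) \<Rightarrow> 'k vec" where
  "stack e D w = vec D (\<lambda>j. w (fst (e j)) $ snd (e j))"

definition unstack :: "('v,'k::field) rep \<Rightarrow> (nat \<Rightarrow> 'v \<times> nat) \<Rightarrow> nat \<Rightarrow> 'k vec \<Rightarrow> 'v \<Rightarrow> 'k vec" where
  "unstack M e D v = (\<lambda>y. vec (dimv M y) (\<lambda>l. v $ (inv_into {0..<D} e (y,l))))"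

text \<open>An enumeration e of the coordinates of the sum of the M_y, y adjacent to x, turns the
  map into M_x into a matrix.\<close>

locale nb_enum =
  fixes adj :: "'v \<Rightarrow> 'v \<Rightarrow> bool" and M :: "('v,'k::field) rep" and x :: 'v
    and e :: "nat \<Rightarrow> 'v \<times> nat" and D :: nat
  assumes fin: "finite {y. adj y x}"
    and wfx: "\<And>y. adj y x \<Longrightarrow> mapr M y x \<in> carrier_mat (dimv M x) (dimv M y)"
    and bij: "bij_betw e {0..<D} (nb_coords adj M x)"
begin

lemma finite_nb_coords: "finite (nb_coords adj M x)" unfolding nb_coords_def using fin by auto

lemma nb_enum_coord: assumes "j < D" shows "adj (fst (e j)) x \<and> snd (e j) < dimv M (fst (e j))"
proof -
  have "e j \<in> nb_coords adj M x" using bij assms unfolding bij_betw_def by auto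
  thus ?thesis unfolding nb_coords_def by (cases "e j", auto)
qed

lemma nb_sum_mat_carrier: "nb_sum_mat M x e D \<in> carrier_mat (dimv M x) D" unfolding nb_sum_mat_def by simp

lemma nb_sum_mat_stack:
  assumes w: "nb_vecs adj M x w" and i: "i < dimv M x"
  shows "(nb_sum_mat M x e D *\<^sub>v stack e D w) $ i = nb_sum adj M x w i"
proof -
  let ?g = "\<lambda>(y,l). mapr M y x $$ (i, l) * w y $ l"
  have "(nb_sum_mat M x e D *\<^sub>v stack e D w) $ i = (\<Sum>j\<in>{0..<D}. ?g (e j))"
    using i unfolding nb_sum_mat_def stack_def
    by (simp add: scalar_prod_def case_prod_beta)
  also have "\<dots> = (\<Sum>p\<in>nb_coords adj M x. ?g p)" by (rule sum.reindex_bij_betw[OF bij])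
  also have "\<dots> = (\<Sum>y\<in>{y. adj y x}. \<Sum>l\<in>{..<dimv M y}. mapr M y x $$ (i, l) * w y $ l)"
    unfolding nb_coords_def by (rule sum.Sigma[symmetric], insert fin, auto)
  also have "\<dots> = nb_sum adj M x w i" unfolding nb_sum_def
  proof (rule sum.cong[OF refl])
    fix y assume "y \<in> {y. adj y x}"
    hence y: "adj y x" by simp
    have wy: "w y \<in> carrier_vec (dimv M y)" using w y unfolding nb_vecs_def by blast
    show "(\<Sum>l\<in>{..<dimv M y}. mapr M y x $$ (i, l) * w y $ l) = (mapr M y x *\<^sub>v w y) $ i"
      using wfx[OF y] wy i by (simp add: scalar_prod_def lessThan_atLeast0)
  qed
  finally show ?thesis .
qed

lemma nb_sum_mat_nb_coord_mat:
  assumes y: "adj y x"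
  shows "nb_sum_mat M x e D * nb_coord_mat M e D y = mapr M y x"
proof (rule eq_matI)
  fix i l assume "i < dim_row (mapr M y x)" "l < dim_col (mapr M y x)"
  hence il: "i < dimv M x" "l < dimv M y" using wfx[OF y] by auto
  let ?g = "\<lambda>p. mapr M (fst p) x $$ (i, snd p) * (if p = (y,l) then 1 else 0)"
  have "(nb_sum_mat M x e D * nb_coord_mat M e D y) $$ (i,l) = (\<Sum>j\<in>{0..<D}. ?g (e j))"
    using il unfolding nb_sum_mat_def nb_coord_mat_def by (simp add: scalar_prod_def)
  also have "\<dots> = (\<Sum>p\<in>nb_coords adj M x. ?g p)" by (rule sum.reindex_bij_betw[OF bij])
  also have "\<dots> = (\<Sum>p\<in>nb_coords adj M x. if p = (y,l) then mapr M (fst p) x $$ (i, snd p) else 0)"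
    by (rule sum.cong, auto)
  also have "\<dots> = mapr M y x $$ (i,l)"
  proof -
    have "(y,l) \<in> nb_coords adj M x" using il y unfolding nb_coords_def by auto
    thus ?thesis by (subst sum.delta[OF finite_nb_coords], simp)
  qed
  finally show "(nb_sum_mat M x e D * nb_coord_mat M e D y) $$ (i,l) = mapr M y x $$ (i,l)" .
qed (insert wfx[OF y], auto simp: nb_sum_mat_def nb_coord_mat_def)

lemma stack_unstack: "v \<in> carrier_vec D \<Longrightarrow> stack e D (unstack M e D v) = v"
  unfolding stack_def unstack_def
  by (intro eq_vecI, insert nb_enum_coord bij, auto simp: bij_betw_inv_into_left)

lemma nb_vecs_unstack: "nb_vecs adj M x (unstack M e D v)"
  unfolding nb_vecs_def unstack_def by auto

lemma stack_zero: "nb_vecs adj M x w \<Longrightarrow> (\<And>y. adj y x \<Longrightarrow> w y = 0\<^sub>v (dimv M y)) \<Longrightarrow> stack e D w = 0\<^sub>v D"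
  unfolding stack_def by (intro eq_vecI, insert nb_enum_coord, auto)

lemma stack_carrier: "stack e D w \<in> carrier_vec D" unfolding stack_def by simp

lemma surj_at_iff_nb_sum_mat: "surj_at adj M x \<longleftrightarrow> (\<forall>b\<in>carrier_vec (dimv M x). \<exists>v\<in>carrier_vec D. nb_sum_mat M x e D *\<^sub>v v = b)"
proof
  assume s: "surj_at adj M x"
  show "\<forall>b\<in>carrier_vec (dimv M x). \<exists>v\<in>carrier_vec D. nb_sum_mat M x e D *\<^sub>v v = b"
  proof
    fix b :: "'k vec" assume b: "b \<in> carrier_vec (dimv M x)"
    then obtain w where w: "nb_vecs adj M x w" "\<forall>i<dimv M x. nb_sum adj M x w i = b $ i"
      using s unfolding surj_at_def by blast
    have "nb_sum_mat M x e D *\<^sub>v stack e D w = b"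
      by (rule eq_vecI, insert w b nb_sum_mat_stack nb_sum_mat_carrier, auto)
    thus "\<exists>v\<in>carrier_vec D. nb_sum_mat M x e D *\<^sub>v v = b" using stack_carrier by blast
  qed
next
  assume s: "\<forall>b\<in>carrier_vec (dimv M x). \<exists>v\<in>carrier_vec D. nb_sum_mat M x e D *\<^sub>v v = b"
  show "surj_at adj M x" unfolding surj_at_def
  proof
    fix z :: "'k vec" assume z: "z \<in> carrier_vec (dimv M x)"
    then obtain v where v: "v \<in> carrier_vec D" "nb_sum_mat M x e D *\<^sub>v v = z" using s by blast
    have "\<forall>i<dimv M x. nb_sum adj M x (unstack M e D v) i = z $ i"
    proof (intro allI impI)
      fix i assume i: "i < dimv M x"
      have "nb_sum adj M x (unstack M e D v) i = (nb_sum_mat M x e D *\<^sub>v stack e D (unstack M e D v)) $ i"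
        using nb_sum_mat_stack[OF nb_vecs_unstack i] by simp
      also have "\<dots> = z $ i" unfolding stack_unstack[OF v(1)] v(2) ..
      finally show "nb_sum adj M x (unstack M e D v) i = z $ i" .
    qed
    thus "\<exists>w. nb_vecs adj M x w \<and> (\<forall>i<dimv M x. nb_sum adj M x w i = z $ i)" using nb_vecs_unstack by blast
  qed
qed

lemma inj_at_nb_sum_mat:
  assumes inj: "inj_at adj M x" and v: "v \<in> carrier_vec D" and z: "nb_sum_mat M x e D *\<^sub>v v = 0\<^sub>v (dimv M x)"
  shows "v = 0\<^sub>v D"
proof -
  have "\<forall>i<dimv M x. nb_sum adj M x (unstack M e D v) i = 0"
  proof (intro allI impI)
    fix i assume i: "i < dimv M x"
    have "nb_sum adj M x (unstack M e D v) i = (nb_sum_mat M x e D *\<^sub>v stack e D (unstack M e D v)) $ i"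
      using nb_sum_mat_stack[OF nb_vecs_unstack i] by simp
    also have "\<dots> = 0" unfolding stack_unstack[OF v] z using i by simp
    finally show "nb_sum adj M x (unstack M e D v) i = 0" .
  qed
  hence "\<And>y. adj y x \<Longrightarrow> unstack M e D v y = 0\<^sub>v (dimv M y)"
    using inj nb_vecs_unstack unfolding inj_at_def by blast
  hence "stack e D (unstack M e D v) = 0\<^sub>v D" using stack_zero nb_vecs_unstack by blast
  thus ?thesis using stack_unstack[OF v] by simp
qed

lemma not_surj_at_annihilator:
  assumes ns: "\<not> surj_at adj M x"
  shows "\<exists>u\<in>carrier_vec (dimv M x). u \<noteq> 0\<^sub>v (dimv M x) \<and>
     (\<forall>y w. adj y x \<longrightarrow> w \<in> carrier_vec (dimv M y) \<longrightarrow> u \<bullet> (mapr M y x *\<^sub>v w) = 0)"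
proof -
  from mat_surjective_or_annihilator[OF nb_sum_mat_carrier] ns[unfolded surj_at_iff_nb_sum_mat]
  obtain u where u: "u\<in>carrier_vec (dimv M x)" "u \<noteq> 0\<^sub>v (dimv M x)"
    "\<forall>v\<in>carrier_vec D. u \<bullet> (nb_sum_mat M x e D *\<^sub>v v) = 0" by blast
  have "\<forall>y w. adj y x \<longrightarrow> w \<in> carrier_vec (dimv M y) \<longrightarrow> u \<bullet> (mapr M y x *\<^sub>v w) = 0"
  proof (intro allI impI)
    fix y and w :: "'k vec" assume y: "adj y x" and w: "w \<in> carrier_vec (dimv M y)"
    have Ec: "nb_coord_mat M e D y \<in> carrier_mat D (dimv M y)" unfolding nb_coord_mat_def by simp
    have "mapr M y x *\<^sub>v w = nb_sum_mat M x e D *\<^sub>v (nb_coord_mat M e D y *\<^sub>v w)"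
      unfolding nb_sum_mat_nb_coord_mat[OF y, symmetric] using Ec w nb_sum_mat_carrier by (metis assoc_mult_mat_vec)
    thus "u \<bullet> (mapr M y x *\<^sub>v w) = 0" using u(3) Ec w by simp
  qed
  thus ?thesis using u by blast
qed

end

lemma nb_enum_exists:
  fixes M :: "('v,'k::field) rep"
  assumes fin: "finite {y. adj y x}" and wfx: "\<And>y. adj y x \<Longrightarrow> mapr M y x \<in> carrier_mat (dimv M x) (dimv M y)"
  shows "\<exists>e. nb_enum adj M x e (card (nb_coords adj M x))"
proof -
  have "finite (nb_coords adj M x)" unfolding nb_coords_def using fin by auto
  from ex_bij_betw_nat_finite[OF this] obtain e where "bij_betw e {0..<card (nb_coords adj M x)} (nb_coords adj M x)" by blast
  thus ?thesis using fin wfx unfolding nb_enum_def by blast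
qed

lemma nb_coords_enum_first:
  assumes fin: "finite {y. adj y x}" and y1: "adj y1 x"
  obtains e k where "bij_betw e {0..<dimv M y1 + k} (nb_coords adj M x)"
    "\<And>j. j < dimv M y1 \<Longrightarrow> e j = (y1, j)"
    "\<And>j. dimv M y1 \<le> j \<Longrightarrow> j < dimv M y1 + k \<Longrightarrow> fst (e j) \<noteq> y1"
proof -
  define n1 where "n1 = dimv M y1"
  define I1 where "I1 = {y1} \<times> {..<n1}"
  define I' where "I' = nb_coords adj M x - I1"
  have I1_sub: "I1 \<subseteq> nb_coords adj M x" unfolding I1_def nb_coords_def n1_def using y1 by auto
  obtain e' where e': "bij_betw e' {0..<card I'} I'"
    using ex_bij_betw_nat_finite[of I'] fin unfolding I'_def nb_coords_def by auto
  define e where "e = (\<lambda>j. if j \<in> {0..<n1} then (y1, j) else e' (j - n1))"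
  have b1: "bij_betw (\<lambda>j. (y1, j)) {0..<n1} I1" unfolding I1_def bij_betw_def inj_on_def by auto
  have shift: "bij_betw (\<lambda>j. j - n1) {n1..<n1 + card I'} {0..<card I'}"
    unfolding bij_betw_def inj_on_def
  proof (intro conjI ballI impI)
    show "(\<lambda>j. j - n1) ` {n1..<n1 + card I'} = {0..<card I'}"
    proof (intro equalityI subsetI)
      fix j assume "j \<in> {0..<card I'}" thus "j \<in> (\<lambda>j. j - n1) ` {n1..<n1 + card I'}"
        by (intro image_eqI[of _ _ "j + n1"], auto)
    qed auto
  qed auto
  have b2: "bij_betw (\<lambda>j. e' (j - n1)) {n1..<n1 + card I'} I'"
    using bij_betw_trans[OF shift e'] by (simp add: comp_def)
  have "bij_betw e ({0..<n1} \<union> {n1..<n1 + card I'}) (I1 \<union> I')"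
    unfolding e_def by (rule bij_betw_disjoint_Un[OF b1 b2], auto simp: I'_def)
  moreover have "{0..<n1} \<union> {n1..<n1 + card I'} = {0..<n1 + card I'}" by auto
  moreover have "I1 \<union> I' = nb_coords adj M x" using I1_sub unfolding I'_def by auto
  ultimately have "bij_betw e {0..<n1 + card I'} (nb_coords adj M x)" by simp
  moreover have "fst (e j) \<noteq> y1" if "n1 \<le> j" "j < n1 + card I'" for j
  proof -
    have "e j \<in> I'" using b2 that unfolding e_def bij_betw_def by auto
    then show ?thesis unfolding I'_def I1_def nb_coords_def n1_def by auto
  qed
  ultimately show ?thesis using that[of e "card I'"] unfolding e_def n1_def by auto
qed

lemma (in nb_enum) bij_at_coordinate_form:
  assumes inj: "inj_at adj M x" and surj: "surj_at adj M x"
  obtains g where "D = dimv M x" "g \<in> carrier_mat (dimv M x) (dimv M x)" "invertible_mat g"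
    "\<And>a. adj a x \<Longrightarrow> g * mapr M a x = nb_coord_mat M e D a"
proof -
  let ?m = "dimv M x" and ?A = "nb_sum_mat M x e D"
  have "?m \<le> D"
    using surjective_mat_dim_le[OF nb_sum_mat_carrier] surj[unfolded surj_at_iff_nb_sum_mat] by blast
  moreover have "D \<le> ?m"
  proof (rule ccontr)
    assume "\<not> D \<le> ?m"
    then obtain v where "v \<in> carrier_vec D" "v \<noteq> 0\<^sub>v D" "?A *\<^sub>v v = 0\<^sub>v ?m"
      using mat_nontrivial_kernel[OF nb_sum_mat_carrier] by auto
    thus False using inj_at_nb_sum_mat[OF inj] by blast
  qed
  ultimately have Dm: "D = ?m" by simp
  have Ac: "?A \<in> carrier_mat ?m ?m" using nb_sum_mat_carrier Dm by simp
  obtain g where g: "g \<in> carrier_mat ?m ?m" "?A * g = 1\<^sub>m ?m" "g * ?A = 1\<^sub>m ?m"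
    using mat_injective_inverse[OF Ac] inj_at_nb_sum_mat[OF inj] Dm by auto
  have "g * mapr M a x = nb_coord_mat M e D a" if a: "adj a x" for a
  proof -
    have Ec: "nb_coord_mat M e D a \<in> carrier_mat ?m (dimv M a)" unfolding nb_coord_mat_def Dm by simp
    have "g * mapr M a x = g * (?A * nb_coord_mat M e D a)" unfolding nb_sum_mat_nb_coord_mat[OF a] ..
    also have "\<dots> = (g * ?A) * nb_coord_mat M e D a" using g(1) Ac Ec by (simp add: assoc_mult_mat)
    also have "\<dots> = nb_coord_mat M e D a" unfolding g(3) using Ec by simp
    finally show ?thesis .
  qed
  moreover have "invertible_mat g" unfolding invertible_mat_def inverts_mat_def
    using g Ac by (intro conjI exI[of _ ?A], auto)
  ultimately show ?thesis using that Dm g(1) by blast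
qed

lemma rep_wf_sink_map:
  assumes wf: "rep_wf adj part M" and x: "part x = orient M"
  shows "\<And>y. adj y x \<Longrightarrow> mapr M y x \<in> carrier_mat (dimv M x) (dimv M y)"
  using wf x unfolding rep_wf_def by blast

text \<open>A nonzero functional at x vanishing on the image would split off the simple
  module at x.\<close>

lemma indecomposable_surj_at:
  fixes M :: "('v,'k::field) rep"
  assumes bip: "bipartite adj part" and indec: "indecomposable adj part M"
    and fin: "finite {y. adj y x}" and x: "part x = orient M" and a0: "a0 \<noteq> x" "dimv M a0 \<noteq> 0"
  shows "surj_at adj M x"
proof (rule ccontr)
  assume ns: "\<not> surj_at adj M x"
  have wf: "rep_wf adj part M" using indec unfolding indecomposable_def by blast
  note wfx = rep_wf_sink_map[OF wf x]
  obtain e where "nb_enum adj M x e (card (nb_coords adj M x))" using nb_enum_exists[of adj x M, OF fin wfx] by blast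
  then interpret nb_enum adj M x e "card (nb_coords adj M x)" .
  obtain u where u: "u\<in>carrier_vec (dimv M x)" "u \<noteq> 0\<^sub>v (dimv M x)"
     "\<And>y w. adj y x \<Longrightarrow> w \<in> carrier_vec (dimv M y) \<Longrightarrow> u \<bullet> (mapr M y x *\<^sub>v w) = 0"
    using not_surj_at_annihilator[OF ns] by blast
  define m where "m = dimv M x"
  obtain g where gc: "g \<in> carrier_mat m m" and ginv: "invertible_mat g" and rowg: "row g (m - 1) = u"
    using invertible_mat_with_last_row[of u m] u(1,2) unfolding m_def by blast
  have m_pos: "0 < m"
  proof (rule ccontr)
    assume "\<not> 0 < m"
    then have "u = 0\<^sub>v (dimv M x)" using u(1) unfolding m_def by (intro eq_vecI) auto
    then show False using u(2) by simp
  qed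
  define p where "p = (\<lambda>a. if a = x then m - 1 else dimv M a)"
  define q where "q = (\<lambda>a. if a = x then 1 else 0::nat)"
  define f where "f = (\<lambda>a. if a = x then g else 1\<^sub>m (dimv M a))"
  have "\<not> indecomposable adj part M"
  proof (rule block_diagonal_not_indecomposable[OF bip wf, of p q f])
    show "\<And>a. p a + q a = dimv M a" unfolding p_def q_def m_def using m_pos m_def by auto
    show "\<And>a. f a \<in> carrier_mat (dimv M a) (dimv M a)" unfolding f_def using gc m_def by auto
    show "\<And>a. invertible_mat (f a)" unfolding f_def using ginv invertible_mat_one by auto
    show "\<And>a. part a \<noteq> orient M \<Longrightarrow> f a = 1\<^sub>m (dimv M a)" unfolding f_def using x by auto
    show "(f b * mapr M a b) $$ (i, l) = 0"
      if ab: "adj a b" "part b = orient M" "i < dimv M b" "l < dimv M a" "(i < p b) \<noteq> (l < p a)" for a b i l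
    proof -
      have ax: "a \<noteq> x" using ab(1,2) x bip unfolding bipartite_def by metis
      show ?thesis
      proof (cases "b = x")
        case False
        thus ?thesis using ab ax unfolding p_def by simp
      next
        case True
        have i: "i = m - 1" using ab(3,4,5) ax True unfolding p_def m_def by auto
        have Mc: "mapr M a x \<in> carrier_mat m (dimv M a)" using wfx[of a] ab(1) True unfolding m_def by simp
        have "(f b * mapr M a b) $$ (i,l) = row g (m - 1) \<bullet> col (mapr M a x) l"
          unfolding f_def using True i gc Mc ab(3,4) unfolding m_def by simp
        also have "\<dots> = u \<bullet> (mapr M a x *\<^sub>v unit_vec (dimv M a) l)"
          unfolding rowg col_eq_mult_unit_vec[OF Mc ab(4)] ..
        also have "\<dots> = 0" using u(3)[of a] ab(1) True ab(4) by simp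
        finally show ?thesis .
      qed
    qed
    show "p a0 \<noteq> 0" unfolding p_def using a0 by simp
    show "q x \<noteq> 0" unfolding q_def by simp
  qed
  thus False using indec by simp
qed

context tree
begin

lemma indecomposable_supp_connected:
  fixes M :: "('v,'k::field) rep"
  assumes bip: "bipartite adj part" and indec: "indecomposable adj part M"
    and c: "c \<in> supp M"
  shows "\<forall>v\<in>supp M. set (tree_path c v) \<subseteq> supp M"
proof (rule ccontr)
  assume "\<not> (\<forall>v\<in>supp M. set (tree_path c v) \<subseteq> supp M)"
  then obtain v1 where v1: "v1 \<in> supp M" "\<not> set (tree_path c v1) \<subseteq> supp M" by blast
  have wf: "rep_wf adj part M" using indec unfolding indecomposable_def by blast
  define C where "C = {v. set (tree_path c v) \<subseteq> supp M}"
  have Cs: "\<And>v. v \<in> C \<Longrightarrow> v \<in> supp M"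
  proof -
    fix v assume "v \<in> C"
    moreover have "v \<in> set (tree_path c v)" using tree_path(3)[of c v] tree_path_nonempty[of c v] last_in_set by metis
    ultimately show "v \<in> supp M" unfolding C_def by auto
  qed
  have cl: "\<And>a b. adj a b \<Longrightarrow> a \<in> C \<Longrightarrow> b \<in> supp M \<Longrightarrow> b \<in> C"
  proof -
    fix a b assume ab: "adj a b" "a \<in> C" "b \<in> supp M"
    from adj_tree_path_cases[OF ab(1), of c] show "b \<in> C"
    proof
      assume "tree_path c b = tree_path c a @ [b] \<and> dist c b = Suc (dist c a)"
      thus ?thesis using ab unfolding C_def by auto
    next
      assume "tree_path c a = tree_path c b @ [a] \<and> dist c a = Suc (dist c b)"
      thus ?thesis using ab unfolding C_def by auto
    qed
  qed
  define p where "p = (\<lambda>a. if a \<in> C then dimv M a else 0)"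
  define q where "q = (\<lambda>a. if a \<in> C then 0 else dimv M a)"
  have "\<not> indecomposable adj part M"
  proof (rule block_diagonal_not_indecomposable[OF bip wf, of p q "\<lambda>a. 1\<^sub>m (dimv M a)"])
    show "\<And>a. p a + q a = dimv M a" unfolding p_def q_def by auto
    show "\<And>a. 1\<^sub>m (dimv M a) \<in> carrier_mat (dimv M a) (dimv M a)" by simp
    show "\<And>a. invertible_mat (1\<^sub>m (dimv M a) :: 'k mat)" by (rule invertible_mat_one)
    show "\<And>a. part a \<noteq> orient M \<Longrightarrow> 1\<^sub>m (dimv M a) = 1\<^sub>m (dimv M a)" by simp
    show "(1\<^sub>m (dimv M b) * mapr M a b) $$ (i, l) = 0"
      if ab: "adj a b" "part b = orient M" "i < dimv M b" "l < dimv M a" "(i < p b) \<noteq> (l < p a)" for a b i l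
    proof -
      have s: "a \<in> supp M" "b \<in> supp M" using ab unfolding supp_def by auto
      have "a \<in> C \<longleftrightarrow> b \<in> C" using cl[OF ab(1)] cl[OF sym[OF ab(1)]] s by blast
      hence False using ab(3,4,5) unfolding p_def by (cases "a \<in> C"; simp)
      thus ?thesis by simp
    qed
    have "c \<in> C" unfolding C_def using c by simp
    thus "p c \<noteq> 0" unfolding p_def using c unfolding supp_def by simp
    have "v1 \<notin> C" unfolding C_def using v1 by simp
    thus "q v1 \<noteq> 0" unfolding q_def using v1 unfolding supp_def by simp
  qed
  thus False using indec by simp
qed

lemma indecomposable_bij_at_two_nbs:
  fixes M :: "('v,'k::field) rep"
  assumes bip: "bipartite adj part" and indec: "indecomposable adj part M"
    and fin: "finite {y. adj y x}" and x: "part x = orient M"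
    and inj: "inj_at adj M x" and surj: "surj_at adj M x"
    and y1: "adj y1 x" and y2: "adj y2 x" and y12: "y1 \<noteq> y2"
    and d1: "dimv M y1 \<noteq> 0" and d2: "dimv M y2 \<noteq> 0"
  shows False
proof -
  have wf: "rep_wf adj part M" using indec unfolding indecomposable_def by blast
  obtain e k where e: "bij_betw e {0..<dimv M y1 + k} (nb_coords adj M x)"
    and e_y1: "\<And>j. j < dimv M y1 \<Longrightarrow> e j = (y1, j)"
    and e_rest: "\<And>j. dimv M y1 \<le> j \<Longrightarrow> j < dimv M y1 + k \<Longrightarrow> fst (e j) \<noteq> y1"
    using nb_coords_enum_first[of adj x y1 M, OF fin y1] by blast
  define n1 where "n1 = dimv M y1"
  let ?D = "n1 + k" and ?m = "dimv M x"
  interpret nb_enum adj M x e ?D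
    using fin rep_wf_sink_map[OF wf x] e unfolding nb_enum_def n1_def by blast
  obtain g where Dm: "?D = ?m" and g: "g \<in> carrier_mat ?m ?m" "invertible_mat g"
    and gE: "\<And>a. adj a x \<Longrightarrow> g * mapr M a x = nb_coord_mat M e ?D a"
    using bij_at_coordinate_form[OF inj surj] by blast
  \<comment> \<open>after the base change g at x, the coordinates of M_y1 split off along the branch of y1\<close>
  define p where "p = (\<lambda>a. if a = x then n1 else if branch x a = y1 then dimv M a else 0)"
  define q where "q = (\<lambda>a. if a = x then ?m - n1 else if branch x a = y1 then 0 else dimv M a)"
  define f where "f = (\<lambda>a. if a = x then g else 1\<^sub>m (dimv M a))"
  have y1x: "y1 \<noteq> x" "y2 \<noteq> x" using y1 y2 irr by auto
  have by1: "branch x y1 = y1" "branch x y2 = y2" using branch_nb sym y1 y2 by auto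
  have "\<not> indecomposable adj part M"
  proof (rule block_diagonal_not_indecomposable[OF bip wf, of p q f])
    show "\<And>a. p a + q a = dimv M a" unfolding p_def q_def using Dm by auto
    show "\<And>a. f a \<in> carrier_mat (dimv M a) (dimv M a)" unfolding f_def using g(1) by auto
    show "\<And>a. invertible_mat (f a)" unfolding f_def using g(2) invertible_mat_one by auto
    show "\<And>a. part a \<noteq> orient M \<Longrightarrow> f a = 1\<^sub>m (dimv M a)" unfolding f_def using x by auto
    show "(f b * mapr M a b) $$ (i, l) = 0"
      if ab: "adj a b" "part b = orient M" "i < dimv M b" "l < dimv M a" "(i < p b) \<noteq> (l < p a)" for a b i l
    proof -
      have ax: "a \<noteq> x" using ab(1,2) x bip unfolding bipartite_def by metis
      show ?thesis
      proof (cases "b = x")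
        case False
        have "branch x a = branch x b" using branch_adj_eq[OF ab(1) ax False] .
        hence False using ab(3,4,5) ax False unfolding p_def by (cases "branch x b = y1"; simp)
        thus ?thesis by simp
      next
        case True
        have ba: "branch x a = a" using branch_nb sym ab(1) True by auto
        have il: "i < ?D" "l < dimv M a" using ab(3,4) True Dm by auto
        have "(f b * mapr M a b) $$ (i,l) = nb_coord_mat M e ?D a $$ (i,l)"
          unfolding f_def using True gE[of a] ab(1) by simp
        also have "\<dots> = (if e i = (a,l) then 1 else 0)" unfolding nb_coord_mat_def using il by simp
        also have "\<dots> = 0"
        proof (cases "a = y1")
          case True
          hence "\<not> i < n1" using ab(4,5) \<open>b = x\<close> ba ax unfolding p_def n1_def by auto
          hence "fst (e i) \<noteq> a" using e_rest il(1) True unfolding n1_def by auto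
          thus ?thesis by auto
        next
          case False
          hence "i < n1" using ab(4,5) \<open>b = x\<close> ba ax unfolding p_def by auto
          hence "e i = (y1, i)" using e_y1 unfolding n1_def by simp
          thus ?thesis using False by auto
        qed
        finally show ?thesis .
      qed
    qed
    show "p y1 \<noteq> 0" unfolding p_def using y1x by1 d1 n1_def by simp
    show "q y2 \<noteq> 0" unfolding q_def using y1x by1 d2 y12 by simp
  qed
  thus False using indec by simp
qed

lemma nb_sum_single_nb:
  fixes M :: "('v,'k::field) rep"
  assumes wfx: "\<And>y. adj y x \<Longrightarrow> mapr M y x \<in> carrier_mat (dimv M x) (dimv M y)"
    and fin: "finite {y. adj y x}" and y: "adj y x"
    and oth: "\<And>y'. adj y' x \<Longrightarrow> y' \<noteq> y \<Longrightarrow> dimv M y' = 0"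
    and w: "nb_vecs adj M x w" and i: "i < dimv M x"
  shows "nb_sum adj M x w i = (mapr M y x *\<^sub>v w y) $ i"
proof -
  have "nb_sum adj M x w i = (\<Sum>y'\<in>{y}. (mapr M y' x *\<^sub>v w y') $ i)" unfolding nb_sum_def
  proof (rule sum.mono_neutral_right)
    show "\<forall>y'\<in>{y. adj y x} - {y}. (mapr M y' x *\<^sub>v w y') $ i = 0"
    proof
      fix y' assume "y' \<in> {y. adj y x} - {y}"
      hence y': "adj y' x" "y' \<noteq> y" by auto
      have "w y' \<in> carrier_vec 0" using w y' oth[OF y'] unfolding nb_vecs_def by metis
      moreover have "mapr M y' x \<in> carrier_mat (dimv M x) 0" using wfx[OF y'(1)] oth[OF y'] by simp
      ultimately have "mapr M y' x *\<^sub>v w y' = 0\<^sub>v (dimv M x)" using mult_mat_vec_dim_0 by blast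
      thus "(mapr M y' x *\<^sub>v w y') $ i = 0" using i by simp
    qed
  qed (insert fin y, auto)
  thus ?thesis by simp
qed

lemma inj_at_single_nb_iff:
  fixes M :: "('v,'k::field) rep"
  assumes wf: "rep_wf adj part M" and fin: "finite {y. adj y x}" and x: "part x = orient M"
    and y: "adj y x" and oth: "\<And>y'. adj y' x \<Longrightarrow> y' \<noteq> y \<Longrightarrow> dimv M y' = 0"
    and surj: "surj_at adj M x"
  shows "inj_at adj M x \<longleftrightarrow> dimv M x = dimv M y"
proof -
  note wfx = rep_wf_sink_map[OF wf x]
  let ?A = "mapr M y x"
  have Ac: "?A \<in> carrier_mat (dimv M x) (dimv M y)" using wfx[OF y] .
  have nb_sum_eq: "nb_sum adj M x w i = (?A *\<^sub>v w y) $ i" if "nb_vecs adj M x w" "i < dimv M x" for w i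
    using nb_sum_single_nb[OF wfx fin y oth that] .
  have Ainj_iff: "inj_at adj M x \<longleftrightarrow> (\<forall>v\<in>carrier_vec (dimv M y). ?A *\<^sub>v v = 0\<^sub>v (dimv M x) \<longrightarrow> v = 0\<^sub>v (dimv M y))"
  proof
    assume inj: "inj_at adj M x"
    show "\<forall>v\<in>carrier_vec (dimv M y). ?A *\<^sub>v v = 0\<^sub>v (dimv M x) \<longrightarrow> v = 0\<^sub>v (dimv M y)"
    proof (intro ballI impI)
      fix v :: "'k vec" assume v: "v \<in> carrier_vec (dimv M y)" and z: "?A *\<^sub>v v = 0\<^sub>v (dimv M x)"
      define w where "w = (\<lambda>y'. if y' = y then v else 0\<^sub>v (dimv M y'))"
      have t: "nb_vecs adj M x w" unfolding nb_vecs_def w_def using v by auto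
      have "\<forall>i<dimv M x. nb_sum adj M x w i = 0" using nb_sum_eq[OF t] z unfolding w_def by simp
      hence "w y = 0\<^sub>v (dimv M y)" using inj t y unfolding inj_at_def by blast
      thus "v = 0\<^sub>v (dimv M y)" unfolding w_def by simp
    qed
  next
    assume ai: "\<forall>v\<in>carrier_vec (dimv M y). ?A *\<^sub>v v = 0\<^sub>v (dimv M x) \<longrightarrow> v = 0\<^sub>v (dimv M y)"
    show "inj_at adj M x" unfolding inj_at_def
    proof (intro allI impI)
      fix w y' assume w: "nb_vecs adj M x w \<and> (\<forall>i<dimv M x. nb_sum adj M x w i = 0)" and y': "adj y' x"
      show "w y' = 0\<^sub>v (dimv M y')"
      proof (cases "y' = y")
        case True
        have wy: "w y \<in> carrier_vec (dimv M y)" using w y unfolding nb_vecs_def by blast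
        have "?A *\<^sub>v w y = 0\<^sub>v (dimv M x)" using nb_sum_eq w Ac wy by (intro eq_vecI, auto)
        thus ?thesis using ai wy True by blast
      next
        case False
        have "w y' \<in> carrier_vec (dimv M y')" using w y' unfolding nb_vecs_def by blast
        hence "dim_vec (w y') = 0" using oth[OF y' False] by (simp only: carrier_vec_def mem_Collect_eq)
        thus ?thesis using oth[OF y' False] by (simp only: vec_of_dim_0)
      qed
    qed
  qed
  have Asurj: "\<And>b. b \<in> carrier_vec (dimv M x) \<Longrightarrow> \<exists>v\<in>carrier_vec (dimv M y). ?A *\<^sub>v v = b"
  proof -
    fix b :: "'k vec" assume b: "b \<in> carrier_vec (dimv M x)"
    then obtain w where w: "nb_vecs adj M x w" "\<forall>i<dimv M x. nb_sum adj M x w i = b $ i"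
      using surj unfolding surj_at_def by blast
    have wy: "w y \<in> carrier_vec (dimv M y)" using w y unfolding nb_vecs_def by blast
    have "?A *\<^sub>v w y = b" using nb_sum_eq[OF w(1)] w(2) Ac b by (intro eq_vecI, auto)
    thus "\<exists>v\<in>carrier_vec (dimv M y). ?A *\<^sub>v v = b" using wy by blast
  qed
  show ?thesis using Ainj_iff surjective_mat_injective_iff[OF Ac Asurj] by simp
qed

end

section \<open>The shift of a sink module\<close>

lemma regular_tree_finite_nbs:
  assumes "regular_tree n adj" shows "finite {y. adj y x}"
proof -
  have sym: "\<And>a b. adj a b \<Longrightarrow> adj b a" and fin: "finite {y. adj x y}"
    using assms unfolding regular_tree_def by auto
  have "{y. adj y x} = {y. adj x y}" using sym by blast
  then show ?thesis using fin by simp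
qed

lemma regular_module_sigma_nonzero:
  assumes "regular_module adj part M" and "is_sigma adj part M N" shows "\<not> Defs.is_zero N"
proof -
  have "sigma_iter adj part (Suc 0) M N"
    by (rule sigma_iter.intros(2)[OF sigma_iter.intros(1) assms(2)])
  then show ?thesis using assms(1) unfolding regular_module_def by blast
qed

locale sigma_of_sink_module = tree adj for adj :: "'v \<Rightarrow> 'v \<Rightarrow> bool" +
  fixes part :: "'v \<Rightarrow> bool" and M N :: "('v,'k::field) rep" and c :: 'v and r :: nat
  assumes finite_nbs: "finite {y. adj y x}" and bip: "bipartite adj part"
    and indec_M: "indecomposable adj part M" and oM: "orient M = True"
    and sinkM: "sink_module adj part M" and cen: "has_center adj M {c}"
    and rdef: "r = diam adj M div 2"
    and sig: "is_sigma adj part M N" and N_nonzero: "\<not> Defs.is_zero N"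
begin

text \<open>Since orient M = True, the sinks of M are the vertices x with part x.\<close>

abbreviation S :: "'v set" where "S \<equiv> supp M"
abbreviation T :: "'v set" where "T \<equiv> supp N"

lemma wfM: "rep_wf adj part M" using indec_M unfolding indecomposable_def by blast
lemma finite_S: "finite S" using wfM unfolding rep_wf_def by blast
lemma finite_T: "finite T" using is_sigmaD(1)[OF sig] unfolding rep_wf_def by blast
lemma orient_N: "orient N = False" using is_sigmaD(2)[OF sig] oM by simp
lemma S_nonempty: "S \<noteq> {}" using indec_M unfolding indecomposable_def Defs.is_zero_def supp_def by auto
lemma T_nonempty: "T \<noteq> {}" using N_nonzero unfolding Defs.is_zero_def supp_def by auto

lemma part_adj: "adj a b \<Longrightarrow> part b = (\<not> part a)" using bip unfolding bipartite_def by metis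

definition dpath :: "'v list" where "dpath = (SOME xs. diam_path adj M xs)"

lemma dpath: "diam_path adj M dpath" unfolding dpath_def using diam_path_exists[OF finite_S S_nonempty] by (rule someI_ex)

lemma dpath_props: "is_path adj dpath" "set dpath \<subseteq> S" "length dpath = Suc (diam adj M)"
  using dpath is_path_nonempty[of adj dpath] unfolding diam_path_def by (auto, cases dpath, auto)

lemma dpath_center: "diam adj M = 2 * r" "dpath ! r = c"
proof -
  let ?t = "length dpath - 1"
  have t: "?t = diam adj M" using dpath_props by simp
  have pc: "path_center dpath = {c}" using cen dpath unfolding has_center_def by blast
  have "even ?t"
  proof (rule ccontr)
    assume o: "odd ?t"
    hence "{dpath ! (?t div 2), dpath ! Suc (?t div 2)} = {c}" using pc unfolding path_center_def Let_def by simp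
    hence "dpath ! (?t div 2) = c" "dpath ! Suc (?t div 2) = c" by (metis insertCI singletonD)+
    hence e: "dpath ! (?t div 2) = dpath ! Suc (?t div 2)" by simp
    have "Suc (?t div 2) < length dpath" using o dpath_props(3) by (auto elim!: oddE)
    from is_path_adj_nth[OF dpath_props(1) this] e irr show False by simp
  qed
  hence "{dpath ! (?t div 2)} = {c}" using pc unfolding path_center_def Let_def by simp
  hence "dpath ! (?t div 2) = c" by simp
  moreover have ev: "even (diam adj M)" using \<open>even ?t\<close> t by (simp only:)
  ultimately show "dpath ! r = c" using t rdef by simp
  show "diam adj M = 2 * r" using ev rdef by simp
qed

lemma length_dpath: "length dpath = Suc (2 * r)" using dpath_props(3) dpath_center(1) by simp

lemma dist_dpath: "j < length dpath \<Longrightarrow> dist c (dpath ! j) = (if j \<le> r then r - j else j - r)"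
  using dist_on_path[OF dpath_props(1) _ dpath_center(2)] length_dpath by simp

lemma dpath_ends: "part (dpath ! 0) = True" "part (dpath ! (2 * r)) = True" "dpath ! 0 \<in> S" "dpath ! (2*r) \<in> S"
  "dist c (dpath ! 0) = r" "dist c (dpath ! (2*r)) = r"
proof -
  have "part (hd dpath) = orient M \<and> part (last dpath) = orient M" using sinkM dpath unfolding sink_module_def by blast
  moreover have "dpath \<noteq> []" using length_dpath by auto
  hence "hd dpath = dpath ! 0" "last dpath = dpath ! (2 * r)" using length_dpath by (simp_all add: hd_conv_nth last_conv_nth)
  ultimately show "part (dpath ! 0) = True" "part (dpath ! (2 * r)) = True" using oM by auto
  show "dpath ! 0 \<in> S" "dpath ! (2*r) \<in> S" using dpath_props(2) length_dpath by auto
  show "dist c (dpath ! 0) = r" "dist c (dpath ! (2*r)) = r" using dist_dpath length_dpath by auto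
qed

lemma center_in_S: "c \<in> S"
proof -
  have "r < length dpath" using length_dpath by simp
  hence "dpath ! r \<in> set dpath" by (rule nth_mem)
  thus ?thesis using dpath_center(2) dpath_props(2) by auto
qed

lemma tree_path_in_S: "v \<in> S \<Longrightarrow> set (tree_path c v) \<subseteq> S"
  using indecomposable_supp_connected[OF bip indec_M center_in_S] by blast

lemma part_dist_center: "part w = (part c = even (dist c w))"
proof -
  have l: "dist c w < length (tree_path c w)" using length_tree_path[of c w] by simp
  have "part (tree_path c w ! dist c w) = (part (tree_path c w ! 0) = even (dist c w))"
    using part_path_nth[OF bip tree_path(1) l] .
  thus ?thesis unfolding tree_path_nth_dist tree_path_nth_0 .
qed

lemma part_center: "part c = even r"
proof -
  have "part (dpath ! 0) = (part c = even (dist c (dpath ! 0)))" by (rule part_dist_center)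
  thus ?thesis unfolding dpath_ends(5) using dpath_ends(1) by simp
qed

lemma part_eq_dist_parity: "part w = (even (dist c w) = even r)"
  using part_dist_center part_center by auto

text \<open>The two ends of a diameter path of M lie in different branches at c.\<close>

lemma far_vertex_other_branch: "\<exists>a. a \<in> S \<and> dist c a = r \<and> part a = True \<and> (a = c \<or> v = c \<or> branch c a \<noteq> branch c v)"
proof (cases "r = 0")
  case True
  hence "dpath ! 0 = c" using dpath_ends(5) dist_eq_0_iff by simp
  thus ?thesis using dpath_ends True by metis
next
  case False
  show ?thesis
  proof (cases "v = c")
    case True thus ?thesis using dpath_ends by metis
  next
    case vc: False
    have l: "r < length dpath" "0 < length dpath" "2 * r < length dpath" using length_dpath by auto
    have b0: "branch c (dpath ! 0) = dpath ! (r - 1)" using branch_on_path(1)[OF dpath_props(1) l(1) dpath_center(2) l(2)] False by simp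
    have b1: "branch c (dpath ! (2*r)) = dpath ! Suc r" using branch_on_path(2)[OF dpath_props(1) l(1) dpath_center(2) l(3)] False by simp
    have "Suc (Suc (r - 1)) < length dpath" using length_dpath False by simp
    from is_path_no_backtrack[OF dpath_props(1) this] have "dpath ! (r - 1) \<noteq> dpath ! Suc r" using False by simp
    hence "branch c (dpath ! 0) \<noteq> branch c v \<or> branch c (dpath ! (2*r)) \<noteq> branch c v" using b0 b1 by auto
    thus ?thesis using dpath_ends by metis
  qed
qed

lemma dist_sum_le_diam:
  assumes u: "u \<in> S" and v: "v \<in> S" and br: "u = c \<or> v = c \<or> branch c u \<noteq> branch c v"
  shows "dist c u + dist c v \<le> 2 * r"
proof -
  let ?J = "rev (tree_path c u) @ tl (tree_path c v)"
  note j = join_tree_paths[OF br]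
  have "set ?J \<subseteq> S" using j(5) tree_path_in_S[OF u] tree_path_in_S[OF v] by auto
  from length_path_le_diam[OF finite_S j(1) this] show ?thesis using j(4) dpath_center(1) by simp
qed

lemma S_radius: "v \<in> S \<Longrightarrow> dist c v \<le> r"
proof -
  assume v: "v \<in> S"
  obtain a where a: "a \<in> S" "dist c a = r" "a = c \<or> v = c \<or> branch c a \<noteq> branch c v" using far_vertex_other_branch[of v] by blast
  from dist_sum_le_diam[OF a(1) v a(3)] a(2) show "dist c v \<le> r" by simp
qed

lemma dim_N_source: "part y = False \<Longrightarrow> dimv N y = dimv M y"
  using is_sigmaD(3)[OF sig] oM by simp

lemma T_source_in_S: "w \<in> T \<Longrightarrow> part w = False \<Longrightarrow> w \<in> S"
  using dim_N_source unfolding supp_def by simp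

lemma notin_T_iff_inj_at: "part x = True \<Longrightarrow> (x \<notin> T \<longleftrightarrow> inj_at adj M x)"
  using sigma_dim_eq_0_iff_inj_at[OF _ bip sig, of x] sym oM unfolding supp_def by auto

lemma notin_T_if_no_S_nb: "part x = True \<Longrightarrow> (\<And>y. adj y x \<Longrightarrow> y \<notin> S) \<Longrightarrow> x \<notin> T"
  using notin_T_iff_inj_at inj_at_if_nbs_zero[of adj x M] unfolding supp_def by auto

lemma in_T_if_new_with_S_nb: "part x = True \<Longrightarrow> x \<notin> S \<Longrightarrow> adj y x \<Longrightarrow> y \<in> S \<Longrightarrow> x \<in> T"
  using notin_T_iff_inj_at not_inj_at_if_new_nb[of M x adj y] unfolding supp_def by auto

lemma surj_at_sink: "part x = True \<Longrightarrow> a0 \<noteq> x \<Longrightarrow> a0 \<in> S \<Longrightarrow> surj_at adj M x"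
  using indecomposable_surj_at[OF bip indec_M finite_nbs, of x a0] oM unfolding supp_def by auto

lemma in_T_if_two_S_nbs:
  assumes x: "part x = True" and y: "adj y1 x" "adj y2 x" "y1 \<noteq> y2" "y1 \<in> S" "y2 \<in> S"
  shows "x \<in> T"
proof (cases "x \<in> S")
  case False thus ?thesis using in_T_if_new_with_S_nb x y by blast
next
  case True
  show ?thesis
  proof (rule ccontr)
    assume "x \<notin> T"
    hence inj: "inj_at adj M x" using notin_T_iff_inj_at x by blast
    have "y1 \<noteq> x" using y irr by auto
    hence surj: "surj_at adj M x" using surj_at_sink x y by blast
    show False using indecomposable_bij_at_two_nbs[OF bip indec_M finite_nbs _ inj surj y(1,2,3)] x oM y(4,5)
      unfolding supp_def by simp
  qed
qed

lemma in_T_single_nb_iff: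
  assumes x: "part x = True" and y: "adj y x" "y \<in> S" and oth: "\<And>y'. adj y' x \<Longrightarrow> y' \<noteq> y \<Longrightarrow> y' \<notin> S"
  shows "x \<in> T \<longleftrightarrow> dimv M x \<noteq> dimv M y"
proof -
  have "y \<noteq> x" using y irr by auto
  hence surj: "surj_at adj M x" using surj_at_sink x y by blast
  have "inj_at adj M x \<longleftrightarrow> dimv M x = dimv M y"
    by (rule inj_at_single_nb_iff[OF wfM finite_nbs _ y(1) _ surj], insert x oM oth, auto simp: supp_def)
  thus ?thesis using notin_T_iff_inj_at[OF x] by blast
qed

text \<open>For r = 0 the module M would be simple at the sink c, and its shift would vanish.\<close>

lemma radius_pos: "r \<ge> 1"
proof (rule ccontr)
  assume "\<not> r \<ge> 1"
  hence r0: "r = 0" by simp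
  have Sc: "\<And>v. v \<in> S \<Longrightarrow> v = c" using S_radius r0 dist_eq_0_iff by fastforce
  have pc: "part c = True" using part_center r0 by simp
  have "Defs.is_zero N" unfolding Defs.is_zero_def
  proof
    fix a
    show "dimv N a = 0"
    proof (cases "part a")
      case False
      hence "a \<notin> S" using Sc pc by auto
      thus ?thesis using dim_N_source False unfolding supp_def by simp
    next
      case True
      have "\<And>y. adj y a \<Longrightarrow> y \<notin> S"
      proof
        fix y assume "adj y a" "y \<in> S"
        hence "part y = False" using part_adj[of y a] True by simp
        thus False using Sc \<open>y \<in> S\<close> pc by auto
      qed
      thus ?thesis using notin_T_if_no_S_nb True unfolding supp_def by auto
    qed
  qed
  thus False using N_nonzero by simp
qed

lemma T_radius: "w \<in> T \<Longrightarrow> dist c w \<le> r"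
proof -
  assume w: "w \<in> T"
  show "dist c w \<le> r"
  proof (cases "part w")
    case False thus ?thesis using T_source_in_S w S_radius by auto
  next
    case True
    have "\<not> (\<forall>y. adj y w \<longrightarrow> y \<notin> S)" using notin_T_if_no_S_nb[of w] True w by auto
    then obtain y where y: "adj y w" "y \<in> S" by blast
    have py: "part y = False" using part_adj[OF y(1)] True by simp
    have "dist c y \<noteq> r" using part_eq_dist_parity[of y] py part_center part_eq_dist_parity[of c] by auto
    hence "dist c y < r" using S_radius[OF y(2)] by simp
    thus ?thesis using adj_dist_Suc[OF y(1), of c] by auto
  qed
qed

text \<open>Every inner sink of such a path has its two path neighbours in S.\<close>

lemma path_in_T:
  assumes p: "is_path adj xs" and int: "\<And>i. 0 < i \<Longrightarrow> i < length xs - 1 \<Longrightarrow> xs ! i \<in> S"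
    and h: "hd xs \<in> T" and l: "last xs \<in> T"
  shows "set xs \<subseteq> T"
proof
  fix v assume "v \<in> set xs"
  then obtain i where i: "i < length xs" "xs ! i = v" by (auto simp: in_set_conv_nth)
  have ne: "xs \<noteq> []" using is_path_nonempty[OF p] .
  have h0: "xs ! 0 \<in> T" using h ne by (simp add: hd_conv_nth)
  have l0: "xs ! (length xs - 1) \<in> T" using l ne by (simp add: last_conv_nth)
  have nbS: "xs ! j \<in> S" if j: "j < length xs" "part (xs ! j) = False" for j
  proof (cases "0 < j \<and> j < length xs - 1")
    case True thus ?thesis using int by blast
  next
    case False
    hence "j = 0 \<or> j = length xs - 1" using j by auto
    hence "xs ! j \<in> T" using h0 l0 by auto
    thus ?thesis using T_source_in_S j by blast
  qed
  show "v \<in> T"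
  proof (cases "0 < i \<and> i < length xs - 1")
    case False
    hence "i = 0 \<or> i = length xs - 1" using i by auto
    thus ?thesis using h0 l0 i by auto
  next
    case True
    have vS: "v \<in> S" using int True i by blast
    show ?thesis
    proof (cases "part v")
      case False thus ?thesis using vS dim_N_source unfolding supp_def by simp
    next
      case pv: True
      obtain j where j: "i = Suc j" using True by (cases i, auto)
      have a1: "adj (xs ! j) v" using is_path_adj_nth[OF p, of j] i j by simp
      have "Suc i < length xs" using True by linarith
      hence "adj v (xs ! Suc i)" using is_path_adj_nth[OF p, of i] i by simp
      hence a2: "adj (xs ! Suc i) v" using sym by blast
      have ne2: "xs ! j \<noteq> xs ! Suc i" using is_path_no_backtrack[OF p, of j] True j by simp
      have p1: "part (xs ! j) = False" using part_adj[OF a1] pv by simp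
      have p2: "part (xs ! Suc i) = False" using part_adj[OF a2] pv by simp
      have s1: "xs ! j \<in> S" using nbS[OF _ p1] j i by simp
      have s2: "xs ! Suc i \<in> S" using nbS[OF _ p2] \<open>Suc i < length xs\<close> by simp
      show ?thesis using in_T_if_two_S_nbs[of v, OF _ a1 a2 ne2 s1 s2] pv by simp
    qed
  qed
qed

text \<open>A boundary vertex is a vertex of T at distance r from c; it is a sink with a single
  neighbour in S.\<close>

lemma boundary_parent:
  assumes x: "x \<in> T" "dist c x = r"
  shows "\<exists>y. adj y x \<and> y \<in> S \<and> tree_path c x = tree_path c y @ [x] \<and> dist c y = r - 1 \<and>
     (\<forall>y'. adj y' x \<longrightarrow> y' \<noteq> y \<longrightarrow> y' \<notin> S)"
proof -
  have px: "part x = True" using part_eq_dist_parity[of x] x by simp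
  have "\<not> (\<forall>y. adj y x \<longrightarrow> y \<notin> S)" using notin_T_if_no_S_nb[of x] px x by auto
  then obtain y where y: "adj y x" "y \<in> S" by blast
  have g: "tree_path c x = tree_path c y @ [x] \<and> dist c x = Suc (dist c y)"
  proof -
    from adj_tree_path_cases[OF y(1), of c] show ?thesis
    proof
      assume "tree_path c y = tree_path c x @ [y] \<and> dist c y = Suc (dist c x)"
      hence "dist c y = Suc r" using x by simp
      thus ?thesis using S_radius[OF y(2)] by simp
    qed
  qed
  have oth: "\<forall>y'. adj y' x \<longrightarrow> y' \<noteq> y \<longrightarrow> y' \<notin> S"
  proof (intro allI impI)
    fix y' assume y': "adj y' x" "y' \<noteq> y"
    from adj_tree_path_cases[OF y'(1), of c] show "y' \<notin> S"
    proof
      assume "tree_path c x = tree_path c y' @ [x] \<and> dist c x = Suc (dist c y')"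
      hence "tree_path c y' = tree_path c y" using g by simp
      hence "y' = y" using tree_path(3)[of c y'] tree_path(3)[of c y] by metis
      thus ?thesis using y' by simp
    next
      assume "tree_path c y' = tree_path c x @ [y'] \<and> dist c y' = Suc (dist c x)"
      thus ?thesis using S_radius[of y'] x by auto
    qed
  qed
  show ?thesis using y g oth x by auto
qed

lemma boundary_tree_path_in_S:
  assumes x: "x \<in> T" "dist c x = r" and v: "v \<in> set (tree_path c x)" "v \<noteq> x"
  shows "v \<in> S"
proof -
  obtain y where y: "adj y x" "y \<in> S" "tree_path c x = tree_path c y @ [x]" using boundary_parent[OF x] by blast
  thus ?thesis using tree_path_in_S[OF y(2)] v by auto
qed

lemma complete_no_boundary:
  assumes comp: "complete_module adj M c r" and x: "x \<in> T"
  shows "dist c x \<noteq> r"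
proof
  assume d: "dist c x = r"
  obtain y where y: "adj y x" "y \<in> S" "tree_path c x = tree_path c y @ [x]" "dist c y = r - 1"
    "\<forall>y'. adj y' x \<longrightarrow> y' \<noteq> y \<longrightarrow> y' \<notin> S" using boundary_parent[OF x d] by blast
  let ?xs = "rev (tree_path c x)"
  have xs: "?xs = x # rev (tree_path c y)" using y(3) by simp
  have p: "is_path adj ?xs" using rev_is_path[OF tree_path(1)] .
  have l: "length ?xs = Suc r" using length_tree_path[of c x] d by simp
  have r: "?xs ! r = c" using tree_path_nth_0[of c x] length_tree_path[of c x] d by (simp add: rev_nth)
  have one: "?xs ! 1 = y" unfolding xs using tree_path_nth_dist[of c y] y(4) radius_pos length_tree_path[of c y]
    by (simp add: rev_nth)
  have "\<forall>i\<in>{1..r}. ?xs ! i \<in> S"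
  proof
    fix i assume i: "i \<in> {1..r}"
    then obtain j where j: "i = Suc j" by (cases i, auto)
    have "?xs ! i = rev (tree_path c y) ! j" unfolding xs j by simp
    moreover have "j < length (rev (tree_path c y))" using i j length_tree_path[of c y] y(4) radius_pos by auto
    ultimately have "?xs ! i \<in> set (tree_path c y)" by (metis nth_mem set_rev)
    thus "?xs ! i \<in> S" using tree_path_in_S[OF y(2)] by auto
  qed
  hence "dimv M (?xs ! 0) = dimv M (?xs ! 1)" using comp p l r unfolding complete_module_def by blast
  hence "dimv M x = dimv M y" using one xs by simp
  moreover have "part x = True" using part_eq_dist_parity[of x] d by simp
  ultimately have "x \<notin> T" using in_T_single_nb_iff[of x y] y by auto
  thus False using x by simp
qed

lemma no_boundary_complete:
  assumes D0: "\<forall>x\<in>T. dist c x \<noteq> r"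
  shows "complete_module adj M c r"
  unfolding complete_module_def
proof (intro conjI allI impI)
  show "1 \<le> r" using radius_pos .
  fix xs assume a: "is_path adj xs \<and> length xs = Suc r \<and> xs ! r = c \<and> (\<forall>i\<in>{1..r}. xs ! i \<in> S)"
  hence p: "is_path adj xs" and l: "length xs = Suc r" and r: "xs ! r = c"
    and s: "\<forall>i\<in>{1..r}. xs ! i \<in> S" by auto
  have ne: "xs \<noteq> []" using l by auto
  have g: "tree_path c (xs ! 0) = rev xs"
    using tree_path_via_path(1)[OF p _ r] l ne by (simp add: hd_conv_nth)
  have d0: "dist c (xs ! 0) = r" using tree_path_via_path(3)[OF p _ r] l ne by (simp add: hd_conv_nth)
  have px: "part (xs ! 0) = True" using part_eq_dist_parity[of "xs ! 0"] d0 by simp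
  have a1: "adj (xs ! 1) (xs ! 0)" using is_path_adj_nth[OF p, of 0] l radius_pos sym by simp
  have s1: "xs ! 1 \<in> S" using s radius_pos by auto
  have oth: "\<And>y'. adj y' (xs ! 0) \<Longrightarrow> y' \<noteq> xs ! 1 \<Longrightarrow> y' \<notin> S"
  proof -
    fix y' assume y': "adj y' (xs ! 0)" "y' \<noteq> xs ! 1"
    from adj_tree_path_cases[OF y'(1), of c] show "y' \<notin> S"
    proof
      assume h: "tree_path c (xs ! 0) = tree_path c y' @ [xs ! 0] \<and> dist c (xs ! 0) = Suc (dist c y')"
      have "tree_path c y' = butlast (rev xs)" using h g by (metis butlast_snoc)
      hence "y' = last (butlast (rev xs))" using tree_path(3)[of c y'] by simp
      also have "\<dots> = xs ! 1"
      proof -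
        have "tl xs \<noteq> []" using l radius_pos by (cases xs, auto)
        hence "last (rev (tl xs)) = hd (tl xs)" by (simp add: last_rev)
        also have "\<dots> = xs ! 1" using hd_tl_nth[of xs] l radius_pos by simp
        finally show ?thesis by (simp add: butlast_rev)
      qed
      finally show ?thesis using y' by simp
    next
      assume "tree_path c y' = tree_path c (xs ! 0) @ [y'] \<and> dist c y' = Suc (dist c (xs ! 0))"
      thus ?thesis using S_radius[of y'] d0 by auto
    qed
  qed
  have "xs ! 0 \<notin> T" using D0 d0 by auto
  thus "dimv M (xs ! 0) = dimv M (xs ! 1)" using in_T_single_nb_iff[OF px a1 s1 oth] by simp
qed

lemma complete_iff_no_boundary: "complete_module adj M c r \<longleftrightarrow> (\<forall>x\<in>T. dist c x \<noteq> r)"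
  using complete_no_boundary no_boundary_complete by blast

lemma length_path_T_le: "is_path adj xs \<Longrightarrow> set xs \<subseteq> T \<Longrightarrow> length xs - 1 \<le> 2 * r"
proof -
  assume p: "is_path adj xs" and s: "set xs \<subseteq> T"
  have ne: "xs \<noteq> []" using is_path_nonempty[OF p] .
  have "hd xs \<in> T" "last xs \<in> T" using hd_in_set[OF ne] last_in_set[OF ne] s by blast+
  hence "dist c (hd xs) \<le> r" "dist c (last xs) \<le> r" using T_radius by blast+
  thus ?thesis using path_length_le_dist[OF p, of c] by simp
qed

lemma source_in_T: "a \<in> S \<Longrightarrow> part a = False \<Longrightarrow> a \<in> T"
  using dim_N_source unfolding supp_def by simp

lemma part_dist_pred_radius: "dist c a = r - 1 \<Longrightarrow> part a = False"
  using part_eq_dist_parity[of a] radius_pos by (cases r, auto)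

lemma part_dist_radius: "dist c a = r \<Longrightarrow> part a = True"
  using part_eq_dist_parity[of a] by simp

definition inner_path :: "'v list" where "inner_path = take (2 * r - 1) (drop 1 dpath)"

lemma inner_path_props: "is_path adj inner_path" "set inner_path \<subseteq> T" "length inner_path = 2 * r - 1" "part (hd inner_path) = False" "part (last inner_path) = False"
proof -
  have l: "length inner_path = 2 * r - 1" unfolding inner_path_def using length_dpath radius_pos by simp
  show pq: "is_path adj inner_path" unfolding inner_path_def using radius_pos length_dpath
    by (intro is_path_take is_path_drop dpath_props(1), auto)
  have sQ: "set inner_path \<subseteq> S" unfolding inner_path_def using dpath_props(2) by (meson in_set_dropD in_set_takeD subset_iff)
  have Qn: "\<And>i. i < length inner_path \<Longrightarrow> inner_path ! i = dpath ! Suc i" unfolding inner_path_def using length_dpath by simp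
  have ne: "inner_path \<noteq> []" using l radius_pos by (cases r, auto)
  have h: "hd inner_path = dpath ! 1" using Qn[of 0] ne by (simp add: hd_conv_nth)
  have e: "Suc (2 * r - 2) = 2 * r - 1" "2 * r - 2 < 2 * r - 1" using radius_pos by auto
  have "last inner_path = inner_path ! (length inner_path - 1)" using ne by (simp add: last_conv_nth)
  moreover have "length inner_path - 1 = 2 * r - 2" using l by simp
  ultimately have "last inner_path = inner_path ! (2 * r - 2)" by simp
  hence la: "last inner_path = dpath ! (2 * r - 1)" using Qn[of "2*r - 2"] e l by simp
  have dh: "dist c (hd inner_path) = r - 1" using h dist_dpath[of 1] length_dpath radius_pos by simp
  have dl: "dist c (last inner_path) = r - 1" using la dist_dpath[of "2*r - 1"] length_dpath radius_pos by simp
  show "part (hd inner_path) = False" "part (last inner_path) = False" using part_dist_pred_radius dh dl by auto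
  moreover have "hd inner_path \<in> S" "last inner_path \<in> S" using hd_in_set[OF ne] last_in_set[OF ne] sQ by blast+
  ultimately have "hd inner_path \<in> T" "last inner_path \<in> T" using source_in_T by blast+
  moreover have "\<And>i. 0 < i \<Longrightarrow> i < length inner_path - 1 \<Longrightarrow> inner_path ! i \<in> S"
  proof -
    fix i assume "0 < i" "i < length inner_path - 1"
    hence "inner_path ! i \<in> set inner_path" by simp
    thus "inner_path ! i \<in> S" using sQ by blast
  qed
  ultimately show "set inner_path \<subseteq> T" using path_in_T[OF pq] by blast
  show "length inner_path = 2 * r - 1" using l .
qed

lemma diam_N_ge: "2 * r - 2 \<le> diam adj N"
  using length_path_le_diam[OF finite_T inner_path_props(1) inner_path_props(2)] inner_path_props(3) by simp

lemma join_in_T: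
  assumes x: "x \<in> T" "dist c x = r" and a: "a \<in> T" "dist c a \<le> r"
    and aS: "a \<noteq> c \<Longrightarrow> dist c a = r \<or> a \<in> S"
    and br: "a = c \<or> branch c x \<noteq> branch c a"
  defines "J \<equiv> rev (tree_path c x) @ tl (tree_path c a)"
  shows "is_path adj J" "set J \<subseteq> T" "length J = r + dist c a + 1" "hd J = x" "last J = a"
    "J ! r = c"
proof -
  have xc: "x \<noteq> c" using x radius_pos dist_eq_0_iff by auto
  have br': "x = c \<or> a = c \<or> branch c x \<noteq> branch c a" using br by auto
  note j = join_tree_paths[OF br', folded J_def]
  show "is_path adj J" "length J = r + dist c a + 1" "hd J = x" "last J = a" "J ! r = c"
    using j x by auto
  have dJ: "distinct J" using distinct_path[OF j(1)] .
  have ne: "J \<noteq> []" using j(1) is_path_nonempty by auto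
  have int: "J ! i \<in> S" if i: "0 < i" "i < length J - 1" for i
  proof -
    have Ji: "J ! i \<in> set J" using i by simp
    have nx: "J ! i \<noteq> x"
    proof
      assume "J ! i = x"
      hence "J ! i = J ! 0" using j(2) ne by (simp add: hd_conv_nth)
      moreover have "i < length J" "0 < length J" using i by auto
      ultimately show False using nth_eq_iff_index_eq[OF dJ, of i 0] i by simp
    qed
    have na: "J ! i \<noteq> a"
    proof
      assume "J ! i = a"
      hence "J ! i = J ! (length J - 1)" using j(3) ne by (simp add: last_conv_nth)
      moreover have "i < length J" "length J - 1 < length J" using i by auto
      ultimately show False using nth_eq_iff_index_eq[OF dJ, of i "length J - 1"] i by simp
    qed
    show ?thesis
    proof (cases "J ! i \<in> set (tree_path c x)")
      case True thus ?thesis using boundary_tree_path_in_S[OF x True nx] by simp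
    next
      case False
      hence ga: "J ! i \<in> set (tree_path c a)" using Ji j(5) by auto
      show ?thesis
      proof (cases "a = c")
        case True thus ?thesis using ga center_in_S by simp
      next
        case False
        from aS[OF False] show ?thesis
        proof
          assume "dist c a = r" thus ?thesis using boundary_tree_path_in_S[OF a(1) _ ga na] by simp
        next
          assume "a \<in> S" thus ?thesis using tree_path_in_S ga by auto
        qed
      qed
    qed
  qed
  show "set J \<subseteq> T" using path_in_T[OF j(1) int] j(2,3) x(1) a(1) by simp
qed

lemma boundary_path_to_source:
  assumes x: "x \<in> T" "dist c x = r"
  shows "\<exists>J. is_path adj J \<and> set J \<subseteq> T \<and> length J = 2 * r \<and> hd J = x \<and> part (last J) = False
     \<and> J ! r = c"
proof -
  have l: "r < length dpath" "1 < length dpath" "2 * r - 1 < length dpath" using length_dpath radius_pos by auto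
  have d1: "dist c (dpath ! 1) = r - 1" "dist c (dpath ! (2*r - 1)) = r - 1" using dist_dpath l radius_pos by auto
  have S1: "dpath ! 1 \<in> S" "dpath ! (2*r - 1) \<in> S" using dpath_props(2) l by auto
  have "\<exists>a\<in>{dpath ! 1, dpath ! (2*r - 1)}. a = c \<or> branch c x \<noteq> branch c a"
  proof (cases "r = 1")
    case True thus ?thesis using dpath_center(2) by auto
  next
    case False
    hence r2: "r \<ge> 2" using radius_pos by simp
    have b1: "branch c (dpath ! 1) = dpath ! (r - 1)" using branch_on_path(1)[OF dpath_props(1) l(1) dpath_center(2) l(2)] r2 by simp
    have b2: "branch c (dpath ! (2*r - 1)) = dpath ! Suc r" using branch_on_path(2)[OF dpath_props(1) l(1) dpath_center(2) l(3)] r2 by simp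
    have "Suc (Suc (r - 1)) < length dpath" using length_dpath r2 by simp
    from is_path_no_backtrack[OF dpath_props(1) this] have "dpath ! (r - 1) \<noteq> dpath ! Suc r" using r2 by simp
    thus ?thesis using b1 b2 by auto
  qed
  then obtain a where a: "a \<in> {dpath ! 1, dpath ! (2*r - 1)}" "a = c \<or> branch c x \<noteq> branch c a" by blast
  have aS: "a \<in> S" "dist c a = r - 1" using a(1) S1 d1 by auto
  have aT: "a \<in> T" using source_in_T[OF aS(1) part_dist_pred_radius[OF aS(2)]] .
  have h1: "dist c a \<le> r" using aS by simp
  have h2: "a \<noteq> c \<Longrightarrow> dist c a = r \<or> a \<in> S" using aS by simp
  note jt = join_in_T[OF x aT h1 h2 a(2)]
  show ?thesis using jt aS part_dist_pred_radius[OF aS(2)] radius_pos by (intro exI[of _ "rev (tree_path c x) @ tl (tree_path c a)"], auto)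
qed

lemma boundary_paths_join:
  assumes x1: "x1 \<in> T" "dist c x1 = r" and x2: "x2 \<in> T" "dist c x2 = r" and b: "branch c x1 \<noteq> branch c x2"
  shows "\<exists>J. is_path adj J \<and> set J \<subseteq> T \<and> length J = Suc (2 * r) \<and> part (hd J) = True \<and> part (last J) = True"
proof -
  have h1: "dist c x2 \<le> r" using x2 by simp
  have h2: "x2 \<noteq> c \<Longrightarrow> dist c x2 = r \<or> x2 \<in> S" using x2 by simp
  have h3: "x2 = c \<or> branch c x1 \<noteq> branch c x2" using b by simp
  note jt = join_in_T[OF x1 x2(1) h1 h2 h3]
  show ?thesis using jt x1 x2 part_dist_radius by (intro exI[of _ "rev (tree_path c x1) @ tl (tree_path c x2)"], auto)
qed

lemma path_through_center:
  assumes p: "is_path adj xs" and b: "dist c (hd xs) + dist c (last xs) < length xs + 1"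
  shows "\<exists>k<length xs. xs ! k = c \<and> dist c (hd xs) = k \<and> dist c (last xs) = length xs - 1 - k"
proof -
  have "c \<in> set xs" using path_length_avoiding_le_dist[OF p] b by fastforce
  then obtain k where k: "k < length xs" "xs ! k = c" by (auto simp: in_set_conv_nth)
  thus ?thesis using tree_path_via_path(3,4)[OF p k] by blast
qed

lemma hd_last_in_T: "is_path adj xs \<Longrightarrow> set xs \<subseteq> T \<Longrightarrow> hd xs \<in> T \<and> last xs \<in> T"
  using is_path_nonempty hd_in_set last_in_set by (metis subsetD)

lemma diam_path_N: "diam_path adj N xs \<Longrightarrow> is_path adj xs \<and> set xs \<subseteq> T \<and> length xs = Suc (diam adj N)"
  unfolding diam_path_def using is_path_nonempty by (metis One_nat_def Suc_pred length_greater_0_conv)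

lemma sigma_complete_case:
  assumes D0: "\<forall>x\<in>T. dist c x \<noteq> r"
  shows "diam adj N = 2*r - 2 \<and> sink_module adj part N \<and> \<not> source_module adj part N \<and> has_center adj N {c}"
proof -
  have Tb: "\<And>w. w \<in> T \<Longrightarrow> dist c w \<le> r - 1" using T_radius D0 by fastforce
  have up: "length xs - 1 \<le> 2 * r - 2" if p: "is_path adj xs" "set xs \<subseteq> T" for xs
  proof -
    have "hd xs \<in> T" "last xs \<in> T" using hd_last_in_T[OF p] by auto
    hence "dist c (hd xs) \<le> r - 1" "dist c (last xs) \<le> r - 1" using Tb by auto
    thus ?thesis using path_length_le_dist[OF p(1), of c] by simp
  qed
  have dN: "diam adj N = 2 * r - 2" using diam_le_bound[OF finite_T T_nonempty up] diam_N_ge by simp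
  have dp: "dist c (hd xs) = r - 1 \<and> dist c (last xs) = r - 1" if dpth: "diam_path adj N xs" for xs
  proof -
    note q = diam_path_N[OF dpth]
    have "hd xs \<in> T" "last xs \<in> T" using hd_last_in_T q by auto
    hence "dist c (hd xs) \<le> r - 1" "dist c (last xs) \<le> r - 1" using Tb by auto
    moreover have "length xs - 1 \<le> dist c (hd xs) + dist c (last xs)" using path_length_le_dist q by blast
    ultimately show ?thesis using q dN radius_pos by arith
  qed
  have sink: "sink_module adj part N" unfolding sink_module_def
    using dp part_dist_pred_radius orient_N by auto
  have "diam_path adj N inner_path" unfolding diam_path_def using inner_path_props dN by auto
  hence nsrc: "\<not> source_module adj part N" unfolding source_module_def using inner_path_props orient_N by auto
  have cen: "has_center adj N {c}" unfolding has_center_def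
  proof (intro allI impI)
    fix xs assume dpth: "diam_path adj N xs"
    note q = diam_path_N[OF dpth]
    have d: "dist c (hd xs) = r - 1" "dist c (last xs) = r - 1" using dp[OF dpth] by auto
    have "dist c (hd xs) + dist c (last xs) < length xs + 1" using d q dN radius_pos by simp
    then obtain k where k: "k < length xs" "xs ! k = c" "dist c (hd xs) = k" using path_through_center q by blast
    have t: "length xs - 1 = 2 * r - 2" using q dN by simp
    have "even (2 * r - 2)" by simp
    moreover have "(2 * r - 2) div 2 = r - 1" by simp
    ultimately show "path_center xs = {c}" unfolding path_center_def Let_def t using k d by simp
  qed
  show ?thesis using dN sink nsrc cen by blast
qed

lemma one_branch_path_length_le:
  assumes same: "\<forall>x\<in>T. dist c x = r \<longrightarrow> branch c x = b"
    and p: "is_path adj xs" "set xs \<subseteq> T"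
  shows "length xs - 1 \<le> 2 * r - 1"
proof (rule ccontr)
  assume "\<not> length xs - 1 \<le> 2 * r - 1"
  hence lx: "length xs - 1 = 2 * r" using length_path_T_le[OF p] by simp
  have ht: "hd xs \<in> T" "last xs \<in> T" using hd_last_in_T[OF p] by auto
  hence "dist c (hd xs) \<le> r" "dist c (last xs) \<le> r" using T_radius by auto
  moreover have "length xs - 1 \<le> dist c (hd xs) + dist c (last xs)" using path_length_le_dist p by blast
  ultimately have dd: "dist c (hd xs) = r" "dist c (last xs) = r" using lx by auto
  have "dist c (hd xs) + dist c (last xs) < length xs + 1" using dd lx by simp
  then obtain k where k: "k < length xs" "xs ! k = c" "dist c (hd xs) = k" using path_through_center p by blast
  have kr: "k = r" using k dd by simp
  have ne: "xs \<noteq> []" using is_path_nonempty p by auto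
  have b1: "branch c (hd xs) = xs ! (k - 1)"
    using branch_on_path(1)[OF p(1) k(1,2), of 0] kr radius_pos ne by (simp add: hd_conv_nth)
  have b2: "branch c (last xs) = xs ! Suc k"
    using branch_on_path(2)[OF p(1) k(1,2), of "length xs - 1"] kr radius_pos ne lx by (simp add: last_conv_nth)
  have "Suc (Suc (k - 1)) < length xs" using kr radius_pos lx by simp
  from is_path_no_backtrack[OF p(1) this] have "xs ! (k - 1) \<noteq> xs ! Suc k" using kr radius_pos by simp
  moreover have "branch c (hd xs) = branch c (last xs)" using same ht dd by simp
  ultimately show False using b1 b2 by simp
qed

lemma one_branch_center:
  assumes x0: "x0 \<in> T" "dist c x0 = r"
    and same: "\<forall>x\<in>T. dist c x = r \<longrightarrow> branch c x = branch c x0"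
    and dN: "diam adj N = 2 * r - 1"
  shows "has_center adj N {c, branch c x0}"
  unfolding has_center_def
proof (intro allI impI)
  fix xs assume dpth: "diam_path adj N xs"
  note q = diam_path_N[OF dpth]
  have p: "is_path adj xs" using q by simp
  have lx: "length xs = 2 * r" using q dN radius_pos by simp
  have ht: "hd xs \<in> T" "last xs \<in> T" using hd_last_in_T q by auto
  hence dle: "dist c (hd xs) \<le> r" "dist c (last xs) \<le> r" using T_radius by auto
  have "dist c (hd xs) + dist c (last xs) < length xs + 1" using dle lx by simp
  then obtain k where k: "k < length xs" "xs ! k = c" "dist c (hd xs) = k"
    "dist c (last xs) = length xs - 1 - k" using path_through_center p by blast
  have ne: "xs \<noteq> []" using lx radius_pos by auto
  have "k = r \<or> k = r - 1" using k dle lx by auto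
  hence "{xs ! (r - 1), xs ! r} = {c, branch c x0}"
  proof
    assume kr: "k = r"
    have "branch c (hd xs) = xs ! (k - 1)"
      using branch_on_path(1)[OF p k(1,2), of 0] kr radius_pos ne by (simp add: hd_conv_nth)
    moreover have "branch c (hd xs) = branch c x0" using same ht(1) k(3) kr by simp
    ultimately show ?thesis using kr k(2) by auto
  next
    assume kr: "k = r - 1"
    have "dist c (last xs) = r" using k(4) kr lx radius_pos by simp
    hence "branch c (last xs) = branch c x0" using same ht(2) by simp
    moreover have "branch c (last xs) = xs ! Suc k"
      using branch_on_path(2)[OF p k(1,2), of "length xs - 1"] kr radius_pos ne lx by (simp add: last_conv_nth)
    ultimately show ?thesis using kr k(2) radius_pos by auto
  qed
  moreover have "length xs - 1 = 2 * r - 1" using lx by simp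
  moreover have "odd (2 * r - 1)" "(2 * r - 1) div 2 = r - 1" "Suc (r - 1) = r" using radius_pos by auto
  ultimately show "path_center xs = {c, branch c x0}" unfolding path_center_def Let_def by simp
qed

lemma sigma_flow_case:
  assumes x0: "x0 \<in> T" "dist c x0 = r"
    and same: "\<forall>x\<in>T. dist c x = r \<longrightarrow> branch c x = branch c x0"
  shows "diam adj N = 2*r - 1 \<and> \<not> sink_module adj part N \<and> \<not> source_module adj part N \<and>
    (\<exists>c'. c' \<noteq> c \<and> adj c c' \<and> has_center adj N {c, c'} \<and>
      (\<exists>xs. is_path adj xs \<and> length xs = Suc r \<and> xs ! 0 = c \<and> xs ! 1 = c' \<and> part (xs ! r) \<noteq> orient N))"
proof -
  obtain J where J: "is_path adj J" "set J \<subseteq> T" "length J = 2 * r" "hd J = x0" "part (last J) = False"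
    using boundary_path_to_source[OF x0] by blast
  have ge: "2 * r - 1 \<le> diam adj N" using length_path_le_diam[OF finite_T J(1,2)] J(3) by simp
  have dN: "diam adj N = 2 * r - 1" using diam_le_bound[OF finite_T T_nonempty one_branch_path_length_le[OF same]] ge by simp
  have Jd: "diam_path adj N J" unfolding diam_path_def using J dN by simp
  have nsink: "\<not> sink_module adj part N" unfolding sink_module_def
    using Jd J part_dist_radius x0 orient_N by auto
  have nsrc: "\<not> source_module adj part N" unfolding source_module_def using Jd J orient_N by auto
  let ?c' = "branch c x0"
  have x0c: "x0 \<noteq> c" using x0 radius_pos dist_eq_0_iff by auto
  have ac: "adj c ?c'" using adj_branch[OF x0c] .
  have c'c: "?c' \<noteq> c" using ac irr by auto
  have cen: "has_center adj N {c, ?c'}" using one_branch_center[OF x0 same dN] .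
  have path: "\<exists>xs. is_path adj xs \<and> length xs = Suc r \<and> xs ! 0 = c \<and> xs ! 1 = ?c' \<and> part (xs ! r) \<noteq> orient N"
  proof (intro exI[of _ "tree_path c x0"] conjI)
    show "is_path adj (tree_path c x0)" by (rule tree_path(1))
    show "length (tree_path c x0) = Suc r" using length_tree_path[of c x0] x0 by simp
    show "tree_path c x0 ! 0 = c" by (rule tree_path_nth_0)
    show "tree_path c x0 ! 1 = ?c'" unfolding branch_def ..
    show "part (tree_path c x0 ! r) \<noteq> orient N" using tree_path_nth_dist[of c x0] x0 part_dist_radius orient_N by simp
  qed
  show ?thesis using dN nsink nsrc cen c'c ac path by blast
qed

lemma sigma_source_case:
  assumes x1: "x1 \<in> T" "dist c x1 = r" and x2: "x2 \<in> T" "dist c x2 = r" and b: "branch c x1 \<noteq> branch c x2"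
  shows "diam adj N = 2*r \<and> \<not> sink_module adj part N \<and> source_module adj part N \<and> has_center adj N {c}"
proof -
  obtain J where J: "is_path adj J" "set J \<subseteq> T" "length J = Suc (2 * r)" "part (hd J) = True" "part (last J) = True"
    using boundary_paths_join[OF x1 x2 b] by blast
  have ge: "2 * r \<le> diam adj N" using length_path_le_diam[OF finite_T J(1,2)] J(3) by simp
  have dN: "diam adj N = 2 * r" using diam_le_bound[OF finite_T T_nonempty length_path_T_le] ge by simp
  have Jd: "diam_path adj N J" unfolding diam_path_def using J dN by simp
  have nsink: "\<not> sink_module adj part N" unfolding sink_module_def using Jd J orient_N by auto
  have dp: "dist c (hd xs) = r \<and> dist c (last xs) = r" if dpth: "diam_path adj N xs" for xs
  proof -
    note q = diam_path_N[OF dpth]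
    have "hd xs \<in> T" "last xs \<in> T" using hd_last_in_T q by auto
    hence "dist c (hd xs) \<le> r" "dist c (last xs) \<le> r" using T_radius by auto
    moreover have "length xs - 1 \<le> dist c (hd xs) + dist c (last xs)" using path_length_le_dist q by blast
    ultimately show ?thesis using q dN by simp
  qed
  have src: "source_module adj part N" unfolding source_module_def using dp part_dist_radius orient_N by auto
  have cen: "has_center adj N {c}" unfolding has_center_def
  proof (intro allI impI)
    fix xs assume dpth: "diam_path adj N xs"
    note q = diam_path_N[OF dpth]
    have d: "dist c (hd xs) = r" "dist c (last xs) = r" using dp[OF dpth] by auto
    have "dist c (hd xs) + dist c (last xs) < length xs + 1" using d q dN by simp
    then obtain k where k: "k < length xs" "xs ! k = c" "dist c (hd xs) = k" using path_through_center q by blast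
    have t: "length xs - 1 = 2 * r" using q dN by simp
    show "path_center xs = {c}" unfolding path_center_def Let_def t using k d by simp
  qed
  show ?thesis using dN nsink src cen by blast
qed

end

lemma regular_sink_module_sigma:
  assumes "regular_tree n adj" "bipartite adj part" "orient M = True" "regular_module adj part M"
    "sink_module adj part M" "has_center adj M {c}" "r = diam adj M div 2" "is_sigma adj part M N"
  shows "sigma_of_sink_module adj part M N c r"
proof -
  have "tree adj" using regular_tree_tree[OF assms(1)] .
  moreover have "finite {y. adj y x}" for x using regular_tree_finite_nbs[OF assms(1)] .
  moreover have "indecomposable adj part M" using assms(4) unfolding regular_module_def by blast
  moreover have "\<not> Defs.is_zero N" using regular_module_sigma_nonzero[OF assms(4,8)] .
  ultimately show ?thesis using assms(2,3,5-8)
    unfolding sigma_of_sink_module_def sigma_of_sink_module_axioms_def by blast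
qed

theorem mainTheorem7:
  fixes adj :: "'v \<Rightarrow> 'v \<Rightarrow> bool" and part :: "'v \<Rightarrow> bool" and n :: nat
    and M N :: "('v, 'k::field) rep" and c :: 'v and r :: nat
  assumes "n \<ge> 3" and "regular_tree n adj" and "bipartite adj part"
    and "rep_wf adj part M" and "orient M = True"
    and "regular_module adj part M"
    and "sink_module adj part M" and "has_center adj M {c}" and "r = diam adj M div 2"
    and "is_sigma adj part M N"
  shows "int (diam adj M) - 2 \<le> int (diam adj N) \<and> diam adj N \<le> diam adj M \<and>
    (int (diam adj N) = int (diam adj M) - 2 \<or> int (diam adj N) = int (diam adj M) - 1
       \<or> diam adj N = diam adj M) \<and>
    ((int (diam adj N) = int (diam adj M) - 2 \<longleftrightarrow> sink_module adj part N) \<and>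
     (sink_module adj part N \<longleftrightarrow> complete_module adj M c r) \<and>
     (int (diam adj N) = int (diam adj M) - 2 \<longrightarrow> has_center adj N {c})) \<and>
    ((int (diam adj N) = int (diam adj M) - 1 \<longleftrightarrow> flow_module adj N) \<and>
     (int (diam adj N) = int (diam adj M) - 1 \<longrightarrow>
        (\<exists>c'. c' \<noteq> c \<and> adj c c' \<and> has_center adj N {c, c'} \<and>
           (\<exists>xs. is_path adj xs \<and> length xs = Suc r \<and> xs ! 0 = c \<and> xs ! 1 = c' \<and>
                 part (xs ! r) \<noteq> orient N)))) \<and>
    ((diam adj N = diam adj M \<longleftrightarrow> source_module adj part N) \<and>
     (diam adj N = diam adj M \<longrightarrow> has_center adj N {c}))"
proof -
  interpret sigma_of_sink_module adj part M N c r
    by (rule regular_sink_module_sigma) (use assms in auto)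
  have dM: "diam adj M = 2 * r" and r1: "r \<ge> 1" using dpath_center(1) radius_pos .
  consider (complete) "\<forall>x\<in>T. dist c x \<noteq> r"
    | (flow) x0 where "x0 \<in> T" "dist c x0 = r"
        "\<forall>x\<in>T. dist c x = r \<longrightarrow> branch c x = branch c x0"
    | (source) x1 x2 where "x1 \<in> T" "dist c x1 = r" "x2 \<in> T" "dist c x2 = r" "branch c x1 \<noteq> branch c x2"
    by blast
  then show ?thesis
  proof cases
    case complete
    have "complete_module adj M c r" using complete_iff_no_boundary complete by blast
    then show ?thesis using sigma_complete_case[OF complete] dM r1
      unfolding flow_module_def by simp
  next
    case flow
    have "\<not> complete_module adj M c r" using complete_iff_no_boundary flow(1,2) by blast
    moreover have "2 * r - 1 \<noteq> 2 * r" using r1 by simp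
    ultimately show ?thesis using sigma_flow_case[OF flow] dM r1
      unfolding flow_module_def by simp
  next
    case source
    have "\<not> complete_module adj M c r" using complete_iff_no_boundary source(1,2) by blast
    then show ?thesis using sigma_source_case[OF source] dM r1
      unfolding flow_module_def by simp
  qed
qed

end
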